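(* Assume the setting and Assumption (A1) of the context. Let $\mathcal F$ be a pointwise measurable class of real functions on $\mathcal Y$ such that either (i) $\mathcal F$ has an envelope $F$ with $E[\sum_{\ell=1}^{N_{\mathbf 1}}F(Y_{\ell,\mathbf 1})]<\infty$ and $\sup_Q\log N(\eta\|F\|_{Q,1},\mathcal F,\|\cdot\|_{Q,1})<\infty$ for every $\eta>0$ (sup over finitely supported probability measures $Q$ on $\mathcal Y$); or (ii) $\mathcal F$ has an envelope $F$ and there is $\beta\in\mathbb R$ with $\|F\|_{\infty,\beta}<\infty$, $E[|\sum_{\ell=1}^{N_{\mathbf 1}}(1+|Y_{\ell,\mathbf 1}|^2)^{-\beta/2}|]<\infty$ and $N(\eta\|F\|_{\infty,\beta},\mathcal F,\|\cdot\|_{\infty,\beta})<\infty$ for every $\eta>0$. Then $$E\Big[\sup_{f\in\mathcal F}\Big|\frac1{\Pi_C}\sum_{\mathbf 1\le\mathbf j\le\mathbf C}\sum_{\ell=1}^{N_{\mathbf j}}f(Y_{\ell,\mathbf j})-E\Big[\sum_{\ell=1}^{N_{\mathbf 1}}f(Y_{\ell,\mathbf 1})\Big]\Big|\Big]=o(1)\quad\text{as }\underline C\to\infty.$$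
   Context: Fix $k,l\ge1$, $\mathcal Y\subset\mathbb R^l$. Cells $\mathbf j\in(\mathbb N^* )^k$, componentwise order $\le$, $\mathbf 1=(1,\dots,1)$. Data array $(N_{\mathbf j},(Y_{\ell,\mathbf j})_{\ell\ge1})_{\mathbf j\ge\mathbf 1}$, $N_{\mathbf j}\in\mathbb N$, $Y_{\ell,\mathbf j}\in\mathcal Y$. $\mathbf C=(C_1,\dots,C_k)$, $\underline C=\min_iC_i$, $\Pi_C=\prod_iC_i$. Assumption (A1): (i) separate exchangeability: for any permutations $\pi_1,\dots,\pi_k$ of $\mathbb N^*$ the array has the same joint law as the array with cell $\mathbf j$ replaced by cell $(\pi_1(j_1),\dots,\pi_k(j_k))$; (ii) for any $\mathbf c\ge\mathbf 1$, cells $\mathbf 1\le\mathbf j\le\mathbf c$ are jointly independent of cells $\mathbf j'\ge\mathbf c+\mathbf 1$; (iii) $E(N_{\mathbf 1})>0$; (iv) asymptotics $\underline C\to\infty$ with $\underline C/C_i\to\lambda_i\ge0$. Pointwise measurable: countable subclass whose pointwise limits yield all of $\mathcal F$. Envelope: measurable $F\ge\sup|f|$. $\|f\|_{Q,1}=\int|f|dQ$; $\|f\|_{\infty,\beta}=\sup_{y\in\mathcal Y}|f(y)(1+|y|^2)^{\beta/2}|$; $N(\varepsilon,\mathcal F,\|\cdot\|)$ = minimal number of closed radius-$\varepsilon$ balls with centers in $\mathcal F$ covering $\mathcal F$. *)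

theory Defs
  imports "HOL-Probability.Probability"
begin

text \<open>Conventions: cells and observation indices are 0-based in this formalization
  (Isabelle cell j corresponds to the paper's cell j + 1, observation index l to l + 1).\<close>

definition cellM :: "(nat \<times> (nat \<Rightarrow> real^'l)) measure" where
  "cellM = count_space UNIV \<Otimes>\<^sub>M PiM UNIV (\<lambda>_. borel)"

definition arrayM :: "('k \<Rightarrow> nat) set \<Rightarrow> (('k \<Rightarrow> nat) \<Rightarrow> nat \<times> (nat \<Rightarrow> real^'l)) measure" where
  "arrayM A = PiM A (\<lambda>_. cellM)"

definition arr :: "(('k \<Rightarrow> nat) \<Rightarrow> 'w \<Rightarrow> nat) \<Rightarrow> (('k \<Rightarrow> nat) \<Rightarrow> nat \<Rightarrow> 'w \<Rightarrow> real^'l)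
    \<Rightarrow> 'w \<Rightarrow> ('k \<Rightarrow> nat) \<Rightarrow> nat \<times> (nat \<Rightarrow> real^'l)" where
  "arr N Y \<omega> = (\<lambda>j. (N j \<omega>, \<lambda>l. Y j l \<omega>))"

definition covering_number :: "ereal \<Rightarrow> 'f set \<Rightarrow> ('f \<Rightarrow> 'f \<Rightarrow> ereal) \<Rightarrow> enat" where
  "covering_number eps F d =
     Inf {enat (card G) | G. finite G \<and> G \<subseteq> F \<and> (\<forall>f\<in>F. \<exists>g\<in>G. d f g \<le> eps)}"

definition L1Q :: "'a pmf \<Rightarrow> ('a \<Rightarrow> real) \<Rightarrow> real" where
  "L1Q Q f = measure_pmf.expectation Q (\<lambda>y. \<bar>f y\<bar>)"

definition wsup_norm :: "(real^'l) set \<Rightarrow> real \<Rightarrow> (real^'l \<Rightarrow> real) \<Rightarrow> ereal" where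
  "wsup_norm Ycal \<beta> f = (SUP y\<in>Ycal. ereal \<bar>f y * (1 + (norm y)\<^sup>2) powr (\<beta> / 2)\<bar>)"

definition pointwise_measurable :: "'a::topological_space set \<Rightarrow> ('a \<Rightarrow> real) set \<Rightarrow> bool" where
  "pointwise_measurable Ycal Fc \<longleftrightarrow>
     (\<forall>f\<in>Fc. f \<in> borel_measurable (restrict_space borel Ycal)) \<and>
     (\<exists>G\<subseteq>Fc. countable G \<and>
        (\<forall>f\<in>Fc. \<exists>g. (\<forall>m. g m \<in> G) \<and> (\<forall>y\<in>Ycal. (\<lambda>m. g m y) \<longlonglongrightarrow> f y)))"

definition envelope :: "'a::topological_space set \<Rightarrow> ('a \<Rightarrow> real) set \<Rightarrow> ('a \<Rightarrow> real) \<Rightarrow> bool" where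
  "envelope Ycal Fc Fe \<longleftrightarrow>
     Fe \<in> borel_measurable (restrict_space borel Ycal) \<and> (\<forall>f\<in>Fc. \<forall>y\<in>Ycal. \<bar>f y\<bar> \<le> Fe y)"

end

theory Submission
  imports Defs
begin

text \<open>Averaging over cyclic shifts in every coordinate and using separate
  exchangeability, the expected uniform deviation of the grid average over cells below C is at
  most that of the average over the m diagonal cells (t, ..., t), t < m, where m is the smallest
  side length. The diagonal cells below m are independent of those from m on, so Jensen's
  inequality compares with a ghost sample, and exchanging the cells t and m + t turns the
  difference into an average over random sign patterns. After truncating the envelope sums at a
  level K, either entropy condition yields a finite net of the class of uniformly bounded size,
  and Hoeffding's inequality for sign patterns makes the randomized average small for large m;
  the truncated part is small by integrability of the envelope. Pointwise measurability reduces
  the class to a countable class of Borel functions, which makes all suprema measurable.\<close>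

section \<open>Sign patterns and Hoeffding's inequality\<close>

definition sign_flip :: "nat set \<Rightarrow> nat \<Rightarrow> real" where
  "sign_flip E t = (if t \<in> E then -1 else 1)"

lemma abs_sign_flip [simp]: "\<bar>sign_flip E t\<bar> = 1"
  by (simp add: sign_flip_def)

lemma sum_exp_sign_flip_eq:
  "(\<Sum>E\<in>Pow {..<m}. exp (\<Sum>t<m. sign_flip E t * x t)) = (\<Prod>t<m. exp (- x t) + exp (x t))"
proof -
  have "exp (\<Sum>t<m. sign_flip E t * x t) = (\<Prod>t\<in>E. exp (- x t)) * (\<Prod>t\<in>{..<m} - E. exp (x t))"
    if "E \<subseteq> {..<m}" for E
  proof -
    have "exp (\<Sum>t<m. sign_flip E t * x t) = (\<Prod>t<m. if t \<in> E then exp (- x t) else exp (x t))"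
      by (auto simp: exp_sum sign_flip_def intro!: prod.cong)
    also have "\<dots> = (\<Prod>t\<in>E. exp (- x t)) * (\<Prod>t\<in>{..<m} - E. exp (x t))"
      using that by (simp add: prod.If_cases Int_absorb1 Diff_eq)
    finally show ?thesis .
  qed
  then show ?thesis
    by (simp add: prod_add[of "{..<m}"])
qed

lemma exp_add_exp_minus_le: "exp (x::real) + exp (-x) \<le> 2 * exp (x\<^sup>2 / 2)"
proof -
  \<comment> \<open>Hoeffding's lemma for a fair coin with values 0 and h.\<close>
  define h where "h = 2 * \<bar>x\<bar>"
  have "-h * (1/2) + ln (1 + (1/2) * (exp h - 1)) \<le> h\<^sup>2 / 8"
    using Hoeffdings_lemma_aux[of h "1/2"] by (simp add: h_def)
  then have "ln ((1 + exp h) / 2) \<le> h / 2 + h\<^sup>2 / 8" by (simp add: field_simps)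
  then have "(1 + exp h) / 2 \<le> exp (h / 2 + h\<^sup>2 / 8)"
    by (metis add_pos_pos divide_pos_pos exp_gt_zero exp_le_cancel_iff exp_ln zero_less_numeral zero_less_one)
  then have "exp (-\<bar>x\<bar>) * ((1 + exp h) / 2) \<le> exp (-\<bar>x\<bar>) * exp (h / 2 + h\<^sup>2 / 8)"
    by (intro mult_left_mono) auto
  also have "exp (-\<bar>x\<bar>) * exp (h / 2 + h\<^sup>2 / 8) = exp (x\<^sup>2 / 2)"
    by (simp add: h_def mult_exp_exp power2_eq_square algebra_simps)
  also have "exp (-\<bar>x\<bar>) * ((1 + exp h) / 2) = (exp (-\<bar>x\<bar>) + exp \<bar>x\<bar>) / 2"
    by (simp add: h_def field_simps mult_exp_exp)
  finally have "exp (-\<bar>x\<bar>) + exp \<bar>x\<bar> \<le> 2 * exp (x\<^sup>2 / 2)" by simp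
  then show ?thesis by (cases "x \<ge> 0") (auto simp: add.commute)
qed

lemma sum_exp_sign_flip_le:
  assumes "\<And>t. t < m \<Longrightarrow> \<bar>x t\<bar> \<le> L"
  shows "(\<Sum>E\<in>Pow {..<m}. exp (\<Sum>t<m. sign_flip E t * x t)) \<le> 2 ^ m * exp (real m * L\<^sup>2 / 2)"
proof -
  have "(\<Prod>t<m. exp (- x t) + exp (x t)) \<le> (\<Prod>t<m. 2 * exp (L\<^sup>2 / 2))"
  proof (rule prod_mono)
    fix t assume "t \<in> {..<m}"
    then have "(x t)\<^sup>2 \<le> L\<^sup>2"
      using assms[of t] by (simp add: abs_le_square_iff[symmetric])
    then have "exp (x t) + exp (- x t) \<le> 2 * exp (L\<^sup>2 / 2)"
      using exp_add_exp_minus_le[of "x t"] by (smt (verit) divide_right_mono exp_le_cancel_iff)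
    then show "0 \<le> exp (- x t) + exp (x t) \<and> exp (- x t) + exp (x t) \<le> 2 * exp (L\<^sup>2 / 2)"
      by (simp add: add_nonneg_nonneg add.commute)
  qed
  also have "\<dots> = 2 ^ m * exp (real m * L\<^sup>2 / 2)"
    by (simp add: power_mult_distrib exp_of_nat_mult[symmetric])
  finally show ?thesis
    by (simp add: sum_exp_sign_flip_eq)
qed

lemma card_sign_flip_tail_le:
  assumes d: "\<And>t. t < m \<Longrightarrow> \<bar>d t\<bar> \<le> L" and L: "L > 0" and \<delta>: "\<delta> > 0"
  shows "real (card {E\<in>Pow {..<m}. m * \<delta> < (\<Sum>t<m. sign_flip E t * d t)})
           \<le> 2 ^ m * exp (- real m * \<delta>\<^sup>2 / (2 * L\<^sup>2))"
proof -
  define l where "l = \<delta> / L\<^sup>2"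
  have l: "l > 0" using L \<delta> by (simp add: l_def)
  define T where "T = {E\<in>Pow {..<m}. m * \<delta> < (\<Sum>t<m. sign_flip E t * d t)}"
  have "real (card T) * exp (l * (m * \<delta>)) = (\<Sum>E\<in>T. exp (l * (m * \<delta>)))"
    by simp
  also have "\<dots> \<le> (\<Sum>E\<in>T. exp (\<Sum>t<m. sign_flip E t * (l * d t)))"
    using l by (intro sum_mono) (auto simp: T_def sum_distrib_left[symmetric] mult.left_commute)
  also have "\<dots> \<le> (\<Sum>E\<in>Pow {..<m}. exp (\<Sum>t<m. sign_flip E t * (l * d t)))"
    by (rule sum_mono2) (auto simp: T_def)
  also have "\<dots> \<le> 2 ^ m * exp (real m * (l * L)\<^sup>2 / 2)"
    using d l by (intro sum_exp_sign_flip_le) (simp add: abs_mult)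
  finally have "real (card T) \<le> 2 ^ m * exp (real m * (l * L)\<^sup>2 / 2) / exp (l * (m * \<delta>))"
    by (subst pos_le_divide_eq) auto
  also have "\<dots> = 2 ^ m * exp (real m * (l * L)\<^sup>2 / 2 - l * (m * \<delta>))"
    by (simp add: exp_diff)
  also have "real m * (l * L)\<^sup>2 / 2 - l * (m * \<delta>) = - real m * \<delta>\<^sup>2 / (2 * L\<^sup>2)"
    using L by (simp add: l_def field_simps power2_eq_square)
  finally show ?thesis
    by (simp add: T_def)
qed

lemma card_sign_flip_abs_tail_le:
  assumes d: "\<And>t. t < m \<Longrightarrow> \<bar>d t\<bar> \<le> L" and L: "L > 0" and \<delta>: "\<delta> > 0"
  shows "real (card {E\<in>Pow {..<m}. m * \<delta> < \<bar>\<Sum>t<m. sign_flip E t * d t\<bar>})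
           \<le> 2 * (2 ^ m * exp (- real m * \<delta>\<^sup>2 / (2 * L\<^sup>2)))"
proof -
  define tail where "tail d = {E\<in>Pow {..<m}. m * \<delta> < (\<Sum>t<m. sign_flip E t * d t)}" for d
  have "{E\<in>Pow {..<m}. m * \<delta> < \<bar>\<Sum>t<m. sign_flip E t * d t\<bar>} = tail d \<union> tail (\<lambda>t. - d t)"
    by (auto simp: tail_def sum_negf abs_if)
  then have "real (card {E\<in>Pow {..<m}. m * \<delta> < \<bar>\<Sum>t<m. sign_flip E t * d t\<bar>})
      \<le> real (card (tail d)) + real (card (tail (\<lambda>t. - d t)))"
    using of_nat_mono[OF card_Un_le[of "tail d" "tail (\<lambda>t. - d t)"]] by simp
  also have "\<dots> \<le> 2 * (2 ^ m * exp (- real m * \<delta>\<^sup>2 / (2 * L\<^sup>2)))"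
    using card_sign_flip_tail_le[of m d L \<delta>] card_sign_flip_tail_le[of m "\<lambda>t. - d t" L \<delta>] d L \<delta>
    by (simp add: tail_def)
  finally show ?thesis .
qed

text \<open>Hoeffding's inequality for the finite class V: a sign pattern is bad if it puts some
  d in V into its tail; bad patterns contribute at most L and are exponentially rare.\<close>
lemma sum_Max_sign_flip_le:
  fixes V :: "(nat \<Rightarrow> real) set"
  assumes V: "finite V" and m: "m > 0" and L: "L > 0" and \<delta>: "\<delta> > 0"
    and bound: "\<And>d t. d \<in> V \<Longrightarrow> t < m \<Longrightarrow> \<bar>d t\<bar> \<le> L"
  shows "(\<Sum>E\<in>Pow {..<m}. Max (insert 0 ((\<lambda>d. \<bar>\<Sum>t<m. sign_flip E t * d t\<bar> / m) ` V)))
          \<le> 2 ^ m * (\<delta> + L * (2 * card V * exp (- real m * \<delta>\<^sup>2 / (2 * L\<^sup>2))))"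
proof -
  define q where "q = exp (- real m * \<delta>\<^sup>2 / (2 * L\<^sup>2))"
  define bad where "bad = (\<Union>d\<in>V. {E\<in>Pow {..<m}. m * \<delta> < \<bar>\<Sum>t<m. sign_flip E t * d t\<bar>})"
  have "real (card bad) \<le> (\<Sum>d\<in>V. real (card {E\<in>Pow {..<m}. m * \<delta> < \<bar>\<Sum>t<m. sign_flip E t * d t\<bar>}))"
    unfolding bad_def of_nat_sum[symmetric] by (intro of_nat_mono card_UN_le V)
  also have "\<dots> \<le> card V * (2 * (2 ^ m * q))"
    unfolding q_def using bound L \<delta> by (intro sum_bounded_above card_sign_flip_abs_tail_le) auto
  finally have card_bad: "real (card bad) \<le> card V * (2 * (2 ^ m * q))" .
  have pattern: "Max (insert 0 ((\<lambda>d. \<bar>\<Sum>t<m. sign_flip E t * d t\<bar> / m) ` V))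
      \<le> \<delta> + (if E \<in> bad then L else 0)" if E: "E \<in> Pow {..<m}" for E
  proof (subst Max_le_iff; (intro ballI)?)
    fix x assume "x \<in> insert 0 ((\<lambda>d. \<bar>\<Sum>t<m. sign_flip E t * d t\<bar> / m) ` V)"
    then consider "x = 0" | d where "d \<in> V" "x = \<bar>\<Sum>t<m. sign_flip E t * d t\<bar> / m"
      by auto
    then show "x \<le> \<delta> + (if E \<in> bad then L else 0)"
    proof cases
      case 2
      have "\<bar>\<Sum>t<m. sign_flip E t * d t\<bar> \<le> (\<Sum>t<m. L)"
        using bound 2 by (intro order.trans[OF sum_abs sum_mono]) (auto simp: abs_mult)
      then have "x \<le> L"
        using m by (simp add: 2(2) divide_le_eq mult.commute)
      moreover have "x \<le> \<delta>" if "E \<notin> bad"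
      proof -
        have "\<bar>\<Sum>t<m. sign_flip E t * d t\<bar> \<le> m * \<delta>"
          using that 2(1) E by (auto simp: bad_def)
        then show ?thesis
          using m by (simp add: 2(2) divide_le_eq mult.commute)
      qed
      ultimately show ?thesis
        using \<delta> by auto
    qed (use \<delta> L in auto)
  qed (use V in auto)
  have "(\<Sum>E\<in>Pow {..<m}. Max (insert 0 ((\<lambda>d. \<bar>\<Sum>t<m. sign_flip E t * d t\<bar> / m) ` V)))
      \<le> (\<Sum>E\<in>Pow {..<m}. \<delta> + (if E \<in> bad then L else 0))"
    by (intro sum_mono pattern)
  also have "\<dots> = 2 ^ m * \<delta> + L * card bad"
  proof -
    have "bad \<subseteq> Pow {..<m}"
      by (auto simp: bad_def)
    then show ?thesis
      by (simp add: sum.distrib card_Pow sum.If_cases Int_absorb1)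
  qed
  also have "\<dots> \<le> 2 ^ m * \<delta> + L * (card V * (2 * (2 ^ m * q)))"
    using card_bad L by (intro add_left_mono mult_left_mono) auto
  finally show ?thesis
    by (simp add: q_def algebra_simps)
qed

lemma sum_lessThan_double:
  fixes f :: "nat \<Rightarrow> 'a::comm_monoid_add"
  shows "(\<Sum>t<2 * m. f t) = (\<Sum>t<m. f t) + (\<Sum>t<m. f (m + t))"
proof -
  have "(\<Sum>t<m + n. f t) = (\<Sum>t<m. f t) + (\<Sum>t<n. f (m + t))" for n
    by (induction n) (auto simp: add.assoc)
  from this[of m] show ?thesis by (simp add: mult_2)
qed

lemma abs_sum_sign_flip_diff_le:
  fixes x :: "nat \<Rightarrow> real"
  shows "\<bar>\<Sum>t<m. sign_flip E t * (x t - x (m + t))\<bar> \<le> (\<Sum>t<2 * m. \<bar>x t\<bar>)"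
proof -
  have "\<bar>\<Sum>t<m. sign_flip E t * (x t - x (m + t))\<bar> \<le> (\<Sum>t<m. \<bar>x t\<bar> + \<bar>x (m + t)\<bar>)"
    by (intro order.trans[OF sum_abs sum_mono]) (simp add: abs_mult abs_triangle_ineq4)
  also have "\<dots> = (\<Sum>t<2 * m. \<bar>x t\<bar>)"
    by (simp add: sum_lessThan_double sum.distrib)
  finally show ?thesis .
qed

lemma abs_sum_sign_flip_diff_approx_le:
  fixes a c env :: "nat \<Rightarrow> real" and K :: real
  assumes env: "\<And>t. t < 2 * m \<Longrightarrow> \<bar>a t\<bar> \<le> env t"
  defines "b \<equiv> (\<lambda>t. if env t \<le> K then a t else 0)"
  shows "\<bar>\<Sum>t<m. sign_flip E t * (a t - a (m + t))\<bar>
     \<le> (\<Sum>t<2 * m. if env t \<le> K then 0 else env t) + (\<Sum>t<2 * m. \<bar>b t - c t\<bar>)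
       + \<bar>\<Sum>t<m. sign_flip E t * (c t - c (m + t))\<bar>"
proof -
  have split: "(\<Sum>t<m. sign_flip E t * (a t - a (m + t))) =
      (\<Sum>t<m. sign_flip E t * ((a t - b t) - (a (m + t) - b (m + t))))
    + (\<Sum>t<m. sign_flip E t * ((b t - c t) - (b (m + t) - c (m + t))))
    + (\<Sum>t<m. sign_flip E t * (c t - c (m + t)))"
    by (simp add: sum.distrib[symmetric] algebra_simps)
  have "\<bar>\<Sum>t<m. sign_flip E t * ((a t - b t) - (a (m + t) - b (m + t)))\<bar> \<le> (\<Sum>t<2 * m. \<bar>a t - b t\<bar>)"
    by (rule abs_sum_sign_flip_diff_le[of E "\<lambda>t. a t - b t" m, simplified])
  also have "\<dots> \<le> (\<Sum>t<2 * m. if env t \<le> K then 0 else env t)"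
    by (rule sum_mono) (use env in \<open>auto simp: b_def\<close>)
  finally show ?thesis
    unfolding split
    using abs_sum_sign_flip_diff_le[of E "\<lambda>t. b t - c t" m] by simp
qed

lemma sum_SUP_sign_flip_le:
  fixes a :: "'g \<Rightarrow> nat \<Rightarrow> real" and env :: "nat \<Rightarrow> real" and V :: "(nat \<Rightarrow> real) set"
  assumes m: "m > 0" and K: "K > 0" and \<delta>: "\<delta> > 0" and V: "finite V" and \<rho>: "\<rho> \<ge> 0"
    and env_nonneg: "\<And>t. t < 2 * m \<Longrightarrow> env t \<ge> 0"
    and env: "\<And>g t. g \<in> G \<Longrightarrow> t < 2 * m \<Longrightarrow> \<bar>a g t\<bar> \<le> env t"
    and V_bound: "\<And>c t. c \<in> V \<Longrightarrow> t < 2 * m \<Longrightarrow> \<bar>c t\<bar> \<le> K"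
    and approx: "\<And>g. g \<in> G \<Longrightarrow>
      \<exists>c\<in>V. (\<Sum>t<2 * m. \<bar>(if env t \<le> K then a g t else 0) - c t\<bar>) \<le> m * \<rho>"
  shows "(\<Sum>E\<in>Pow {..<m}. SUP g\<in>G. ennreal (\<bar>\<Sum>t<m. sign_flip E t * (a g t - a g (m + t))\<bar> / m))
    \<le> ennreal (2 ^ m * ((\<Sum>t<2 * m. if env t \<le> K then 0 else env t) / m + \<rho> + \<delta>
          + 2 * K * (2 * card V * exp (- real m * \<delta>\<^sup>2 / (8 * K\<^sup>2)))))"
proof -
  define D where "D = (\<lambda>c t. c t - c (m + t)) ` V"
  define T where "T = (\<Sum>t<2 * m. if env t \<le> K then 0 else env t)"
  define MD where "MD E = Max (insert 0 ((\<lambda>d. \<bar>\<Sum>t<m. sign_flip E t * d t\<bar> / m) ` D))" for E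
  have D: "finite D" "card D \<le> card V"
    using V by (auto simp: D_def card_image_le)
  have T: "T \<ge> 0"
    unfolding T_def using env_nonneg by (intro sum_nonneg) auto
  have MD: "MD E \<ge> 0" for E
    unfolding MD_def using D by (intro Max_ge) auto
  have pattern: "(SUP g\<in>G. ennreal (\<bar>\<Sum>t<m. sign_flip E t * (a g t - a g (m + t))\<bar> / m))
      \<le> ennreal (T / m + \<rho> + MD E)" for E
  proof (rule SUP_least)
    fix g assume g: "g \<in> G"
    obtain c where c: "c \<in> V" "(\<Sum>t<2 * m. \<bar>(if env t \<le> K then a g t else 0) - c t\<bar>) \<le> m * \<rho>"
      using approx[OF g] by blast
    have "\<bar>\<Sum>t<m. sign_flip E t * (a g t - a g (m + t))\<bar>
        \<le> T + m * \<rho> + \<bar>\<Sum>t<m. sign_flip E t * (c t - c (m + t))\<bar>"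
      using abs_sum_sign_flip_diff_approx_le[where a="a g" and env=env and K=K and E=E and c=c] env[OF g] c(2)
      unfolding T_def by fastforce
    moreover have "\<bar>\<Sum>t<m. sign_flip E t * (c t - c (m + t))\<bar> / m \<le> MD E"
      unfolding MD_def using D c(1) by (intro Max_ge) (auto simp: D_def)
    ultimately show "ennreal (\<bar>\<Sum>t<m. sign_flip E t * (a g t - a g (m + t))\<bar> / m) \<le> ennreal (T / m + \<rho> + MD E)"
      using m by (intro ennreal_leI) (simp add: field_simps)
  qed
  have "(\<Sum>E\<in>Pow {..<m}. MD E) \<le> 2 ^ m * (\<delta> + 2 * K * (2 * card D * exp (- real m * \<delta>\<^sup>2 / (2 * (2 * K)\<^sup>2))))"
    unfolding MD_def
  proof (rule sum_Max_sign_flip_le[OF D(1) m _ \<delta>])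
    fix d t assume "d \<in> D" "t < m"
    then obtain c where "c \<in> V" "d = (\<lambda>t. c t - c (m + t))"
      by (auto simp: D_def)
    then show "\<bar>d t\<bar> \<le> 2 * K"
      using V_bound[of c t] V_bound[of c "m + t"] \<open>t < m\<close> by auto
  qed (use K in simp)
  also have "\<dots> \<le> 2 ^ m * (\<delta> + 2 * K * (2 * card V * exp (- real m * \<delta>\<^sup>2 / (8 * K\<^sup>2))))"
    using D(2) K by (intro mult_left_mono add_left_mono mult_right_mono) (auto simp: power_mult_distrib)
  finally have "(\<Sum>E\<in>Pow {..<m}. T / m + \<rho> + MD E)
      \<le> 2 ^ m * (T / m + \<rho> + \<delta> + 2 * K * (2 * card V * exp (- real m * \<delta>\<^sup>2 / (8 * K\<^sup>2))))"
    by (simp add: sum.distrib card_Pow algebra_simps)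
  then have "(\<Sum>E\<in>Pow {..<m}. ennreal (T / m + \<rho> + MD E))
      \<le> ennreal (2 ^ m * (T / m + \<rho> + \<delta> + 2 * K * (2 * card V * exp (- real m * \<delta>\<^sup>2 / (8 * K\<^sup>2)))))"
    using T \<rho> MD by (subst sum_ennreal) (auto intro: ennreal_leI)
  then show ?thesis
    unfolding T_def[symmetric] by (rule order.trans[OF sum_mono[OF pattern]])
qed

lemma borel_measurable_restrict_space_extend:
  fixes f :: "'a::topological_space \<Rightarrow> real"
  assumes f: "f \<in> borel_measurable (restrict_space borel S)"
  obtains g where "g \<in> borel_measurable borel" "\<And>y. y \<in> S \<Longrightarrow> g y = f y"
proof -
  have "\<exists>A \<in> sets borel. S \<inter> A = {y\<in>S. f y \<le> real_of_rat q}" for q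
  proof -
    have "f -` {..real_of_rat q} \<inter> space (restrict_space borel S) \<in> sets (restrict_space borel S)"
      by (rule measurable_sets[OF f]) auto
    then show ?thesis
      by (auto simp: sets_restrict_space space_restrict_space)
  qed
  then obtain A where A: "\<And>q. A q \<in> sets borel" "\<And>q. S \<inter> A q = {y\<in>S. f y \<le> real_of_rat q}"
    by metis
  \<comment> \<open>On S, the value f y is the infimum of the rationals q with y in A q.\<close>
  define g where "g y = (INF q. if y \<in> A q then ereal (real_of_rat q) else \<infinity>)" for y
  have "g \<in> borel_measurable borel"
    unfolding g_def using A(1) by measurable
  moreover have "g y = ereal (f y)" if y: "y \<in> S" for y
  proof (rule antisym)
    have A_iff: "y \<in> A q \<longleftrightarrow> f y \<le> real_of_rat q" for q
      using A(2)[of q] y by blast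
    show "g y \<le> ereal (f y)"
    proof (rule ereal_le_epsilon2)
      fix e :: real assume "0 < e"
      then obtain q where q: "f y < real_of_rat q" "real_of_rat q < f y + e"
        using Rats_dense_in_real[of "f y" "f y + e"] by (auto simp: Rats_def)
      then have "g y \<le> ereal (real_of_rat q)"
        unfolding g_def using A_iff[of q] by (intro INF_lower2[of q]) auto
      also have "\<dots> \<le> ereal (f y) + ereal e"
        using q by simp
      finally show "g y \<le> ereal (f y) + ereal e" .
    qed
    show "ereal (f y) \<le> g y"
      unfolding g_def using A_iff by (intro INF_greatest) auto
  qed
  ultimately show ?thesis
    by (intro that[of "\<lambda>y. real_of_ereal (g y)"]) auto
qed

lemma pointwise_measurable_countable_borel_class:
  assumes "pointwise_measurable Ycal Fc"
  obtains H where "countable H" "\<And>h. h \<in> H \<Longrightarrow> h \<in> borel_measurable borel"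
    "\<And>h. h \<in> H \<Longrightarrow> \<exists>f\<in>Fc. \<forall>y\<in>Ycal. h y = f y"
    "\<And>f. f \<in> Fc \<Longrightarrow> \<exists>g. (\<forall>k. g k \<in> H) \<and> (\<forall>y\<in>Ycal. (\<lambda>k. g k y) \<longlonglongrightarrow> f y)"
proof -
  have Fc_meas: "\<And>f. f \<in> Fc \<Longrightarrow> f \<in> borel_measurable (restrict_space borel Ycal)"
    and "\<exists>G\<subseteq>Fc. countable G \<and> (\<forall>f\<in>Fc. \<exists>g. (\<forall>k. g k \<in> G) \<and> (\<forall>y\<in>Ycal. (\<lambda>k. g k y) \<longlonglongrightarrow> f y))"
    using assms unfolding pointwise_measurable_def by auto
  then obtain G where G: "G \<subseteq> Fc" "countable G"
      "\<And>f. f \<in> Fc \<Longrightarrow> \<exists>g. (\<forall>k. g k \<in> G) \<and> (\<forall>y\<in>Ycal. (\<lambda>k. g k y) \<longlonglongrightarrow> f y)"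
    by blast
  have "\<exists>e. e \<in> borel_measurable borel \<and> (\<forall>y\<in>Ycal. e y = f y)" if "f \<in> Fc" for f
    by (rule borel_measurable_restrict_space_extend[OF Fc_meas[OF that]]) blast
  then obtain ext where ext: "\<And>f. f \<in> Fc \<Longrightarrow> ext f \<in> borel_measurable borel"
      "\<And>f y. f \<in> Fc \<Longrightarrow> y \<in> Ycal \<Longrightarrow> ext f y = f y"
    using bchoice[of Fc "\<lambda>f e. e \<in> borel_measurable borel \<and> (\<forall>y\<in>Ycal. e y = f y)"] by blast
  show ?thesis
  proof (rule that[of "ext ` G"])
    show "countable (ext ` G)"
      using G(2) by simp
    show "h \<in> borel_measurable borel" if "h \<in> ext ` G" for h
      using that G(1) ext(1) by auto
    show "\<exists>f\<in>Fc. \<forall>y\<in>Ycal. h y = f y" if "h \<in> ext ` G" for h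
      using that G(1) ext(2) by blast
    show "\<exists>g. (\<forall>k. g k \<in> ext ` G) \<and> (\<forall>y\<in>Ycal. (\<lambda>k. g k y) \<longlonglongrightarrow> f y)" if f: "f \<in> Fc" for f
    proof -
      obtain g where g: "\<And>k. g k \<in> G" "\<And>y. y \<in> Ycal \<Longrightarrow> (\<lambda>k. g k y) \<longlonglongrightarrow> f y"
        using G(3)[OF f] by blast
      have "ext (g k) y = g k y" if "y \<in> Ycal" for k y
        using ext(2) g(1) G(1) that by blast
      then show ?thesis
        using g by (intro exI[of _ "\<lambda>k. ext (g k)"]) auto
    qed
  qed
qed

lemma (in prob_space) nn_integral_SUP_centered_le_indep:
  fixes a b :: "'h \<Rightarrow> _ \<Rightarrow> real"
  assumes indep: "indep_var S X T Z" and H: "countable H"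
    and a[measurable]: "\<And>h. h \<in> H \<Longrightarrow> a h \<in> borel_measurable S"
    and b[measurable]: "\<And>h. h \<in> H \<Longrightarrow> b h \<in> borel_measurable T"
    and b_int: "\<And>h. h \<in> H \<Longrightarrow> integrable M (\<lambda>\<omega>. b h (Z \<omega>))"
  shows "(\<integral>\<^sup>+\<omega>. (SUP h\<in>H. ennreal \<bar>a h (X \<omega>) - expectation (\<lambda>\<omega>'. b h (Z \<omega>'))\<bar>) \<partial>M)
      \<le> (\<integral>\<^sup>+\<omega>. (SUP h\<in>H. ennreal \<bar>a h (X \<omega>) - b h (Z \<omega>)\<bar>) \<partial>M)"
proof -
  have [measurable]: "X \<in> M \<rightarrow>\<^sub>M S" "Z \<in> M \<rightarrow>\<^sub>M T"
    and prod: "distr M S X \<Otimes>\<^sub>M distr M T Z = distr M (S \<Otimes>\<^sub>M T) (\<lambda>\<omega>. (X \<omega>, Z \<omega>))"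
    using indep unfolding indep_var_distribution_eq by auto
  define \<mu> where "\<mu> = distr M T Z"
  interpret \<mu>: prob_space \<mu>
    unfolding \<mu>_def by (rule prob_space_distr) simp
  have \<mu>_int: "integrable \<mu> (b h)" and \<mu>_exp: "(\<integral>y. b h y \<partial>\<mu>) = expectation (\<lambda>\<omega>. b h (Z \<omega>))"
    if "h \<in> H" for h
    unfolding \<mu>_def using that b_int by (auto simp: integrable_distr_eq integral_distr)
  define \<Phi> where "\<Phi> z = (SUP h\<in>H. ennreal \<bar>a h (fst z) - b h (snd z)\<bar>)" for z
  define \<Phi>\<^sub>1 where "\<Phi>\<^sub>1 x = (SUP h\<in>H. ennreal \<bar>a h x - \<integral>y. b h y \<partial>\<mu>\<bar>)" for x
  have [measurable]: "\<Phi> \<in> borel_measurable (S \<Otimes>\<^sub>M T)" "\<Phi>\<^sub>1 \<in> borel_measurable S"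
    unfolding \<Phi>_def[abs_def] \<Phi>\<^sub>1_def[abs_def] by (auto intro!: borel_measurable_SUP[OF H])
  \<comment> \<open>Jensen's inequality for the conditional expectation given X.\<close>
  have jensen: "\<Phi>\<^sub>1 x \<le> (\<integral>\<^sup>+y. \<Phi> (x, y) \<partial>\<mu>)" for x
    unfolding \<Phi>\<^sub>1_def
  proof (rule SUP_least)
    fix h assume h: "h \<in> H"
    have "\<bar>a h x - \<integral>y. b h y \<partial>\<mu>\<bar> = \<bar>\<integral>y. a h x - b h y \<partial>\<mu>\<bar>"
      using \<mu>_int[OF h] by (simp add: \<mu>.prob_space)
    also have "ennreal \<dots> \<le> (\<integral>\<^sup>+y. ennreal \<bar>a h x - b h y\<bar> \<partial>\<mu>)"
      using integral_norm_bound_ennreal[of \<mu> "\<lambda>y. a h x - b h y"] \<mu>_int[OF h] by simp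
    also have "\<dots> \<le> (\<integral>\<^sup>+y. \<Phi> (x, y) \<partial>\<mu>)"
      unfolding \<Phi>_def using h by (intro nn_integral_mono SUP_upper2) auto
    finally show "ennreal \<bar>a h x - \<integral>y. b h y \<partial>\<mu>\<bar> \<le> (\<integral>\<^sup>+y. \<Phi> (x, y) \<partial>\<mu>)" .
  qed
  have "(\<integral>\<^sup>+\<omega>. (SUP h\<in>H. ennreal \<bar>a h (X \<omega>) - expectation (\<lambda>\<omega>'. b h (Z \<omega>'))\<bar>) \<partial>M)
      = (\<integral>\<^sup>+x. \<Phi>\<^sub>1 x \<partial>distr M S X)"
    by (subst nn_integral_distr) (auto simp: \<Phi>\<^sub>1_def \<mu>_exp intro!: nn_integral_cong SUP_cong)
  also have "\<dots> \<le> (\<integral>\<^sup>+x. \<integral>\<^sup>+y. \<Phi> (x, y) \<partial>\<mu> \<partial>distr M S X)"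
    by (intro nn_integral_mono jensen)
  also have "\<dots> = (\<integral>\<^sup>+z. \<Phi> z \<partial>distr M (S \<Otimes>\<^sub>M T) (\<lambda>\<omega>. (X \<omega>, Z \<omega>)))"
    unfolding prod[symmetric] \<mu>_def by (rule \<mu>.nn_integral_fst[unfolded \<mu>_def]) simp
  also have "\<dots> = (\<integral>\<^sup>+\<omega>. (SUP h\<in>H. ennreal \<bar>a h (X \<omega>) - b h (Z \<omega>)\<bar>) \<partial>M)"
    by (subst nn_integral_distr) (auto simp: \<Phi>_def)
  finally show ?thesis .
qed

lemma ennreal_power_mult_divide_cancel: "2 ^ m * x / 2 ^ m = (x :: ennreal)"
proof -
  have "(2::ennreal) ^ m \<noteq> 0" "(2::ennreal) ^ m \<noteq> top"
    by (simp_all add: power_eq_top_ennreal)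
  then show ?thesis
    by (metis ennreal_mult_divide_eq mult.commute)
qed

lemma covering_number_le_enatE:
  assumes "covering_number eps F d \<le> enat B"
  obtains G where "finite G" "G \<subseteq> F" "\<And>f. f \<in> F \<Longrightarrow> \<exists>g\<in>G. d f g \<le> eps" "card G \<le> B"
proof -
  define S where "S = {enat (card G) | G. finite G \<and> G \<subseteq> F \<and> (\<forall>f\<in>F. \<exists>g\<in>G. d f g \<le> eps)}"
  have le: "Inf S \<le> enat B"
    using assms unfolding covering_number_def S_def .
  then have "S \<noteq> {}"
    by (auto simp: Inf_enat_def)
  then have "Inf S \<in> S"
    unfolding Inf_enat_def by (auto intro: LeastI_ex)
  with le that show ?thesis
    unfolding S_def by auto
qed

lemma covering_number_finiteE:
  assumes "covering_number eps F d < \<infinity>"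
  obtains G where "finite G" "G \<subseteq> F" "\<And>f. f \<in> F \<Longrightarrow> \<exists>g\<in>G. d f g \<le> eps"
proof -
  obtain B where "covering_number eps F d \<le> enat B"
    using assms by (cases "covering_number eps F d") auto
  then show ?thesis
    using covering_number_le_enatE that by metis
qed

lemma L1Q_cong:
  assumes "finite (set_pmf Q)" "\<And>y. y \<in> set_pmf Q \<Longrightarrow> f y = g y"
  shows "L1Q Q f = L1Q Q g"
  using assms unfolding L1Q_def by (simp add: integral_measure_pmf_real)

lemma L1Q_map_pmf_of_set:
  assumes "finite I" "I \<noteq> {}"
  shows "L1Q (map_pmf u (pmf_of_set I)) f = (\<Sum>p\<in>I. \<bar>f (u p)\<bar>) / card I"
  unfolding L1Q_def using assms by (simp add: integral_pmf_of_set)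

lemma abs_le_wsup_norm:
  assumes y: "y \<in> Ycal" and bound: "wsup_norm Ycal \<beta> f \<le> ereal c"
  shows "\<bar>f y\<bar> \<le> c * (1 + (norm y)\<^sup>2) powr (- \<beta> / 2)"
proof -
  define p where "p = (1 + (norm y)\<^sup>2) powr (\<beta> / 2)"
  have "1 + (norm y)\<^sup>2 > 0"
    by (simp add: add_pos_nonneg)
  then have p: "p > 0"
    unfolding p_def by simp
  have "ereal (\<bar>f y\<bar> * p) \<le> wsup_norm Ycal \<beta> f"
    unfolding wsup_norm_def p_def using y p_def p by (intro SUP_upper2[OF y]) (simp add: abs_mult)
  then have "ereal (\<bar>f y\<bar> * p) \<le> ereal c"
    using bound by (rule order.trans)
  then have "\<bar>f y\<bar> * p \<le> c"
    by simp
  then have "\<bar>f y\<bar> \<le> c * inverse p"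
    using p by (simp add: field_simps)
  also have "inverse p = (1 + (norm y)\<^sup>2) powr (- \<beta> / 2)"
    unfolding p_def by (metis minus_divide_left powr_minus)
  finally show ?thesis .
qed

section \<open>Cyclic shifts of a grid\<close>

definition rotate_below :: "nat \<Rightarrow> nat \<Rightarrow> nat \<Rightarrow> nat" where
  "rotate_below c a x = (if x < c then (a + x) mod c else x)"

lemma mod_add_rotate_back:
  fixes c x t :: nat
  assumes "x < c"
  shows "((x + t) mod c + (c - t mod c)) mod c = x" and "((x + (c - t mod c)) mod c + t) mod c = x"
proof -
  have "t mod c < c"
    using assms by simp
  then have "x + t + (c - t mod c) = x + c * (t div c) + c" "x + (c - t mod c) + t = x + c * (t div c) + c"
    using mult_div_mod_eq[of c t] by linarith+
  then show "((x + t) mod c + (c - t mod c)) mod c = x" "((x + (c - t mod c)) mod c + t) mod c = x"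
    unfolding mod_add_left_eq using assms by simp_all
qed

lemma bij_rotate_below:
  assumes "c > 0"
  shows "bij (rotate_below c a)"
proof (rule bij_betw_byWitness[where f'="\<lambda>x. if x < c then (x + (c - a mod c)) mod c else x"])
  show "\<forall>x\<in>UNIV. (if rotate_below c a x < c then (rotate_below c a x + (c - a mod c)) mod c
      else rotate_below c a x) = x"
    using assms mod_add_rotate_back(1)[of _ c a] by (auto simp: rotate_below_def add.commute)
  show "\<forall>y\<in>UNIV. rotate_below c a (if y < c then (y + (c - a mod c)) mod c else y) = y"
    using assms mod_add_rotate_back(2)[of _ c a] by (auto simp: rotate_below_def add.commute)
qed auto

lemma grid_eq_PiE: "{j::'k::finite \<Rightarrow> nat. \<forall>i. j i < c i} = (\<Pi>\<^sub>E i\<in>UNIV. {..<c i})"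
  by (auto simp: PiE_UNIV_domain Pi_def)

lemma card_grid: "card {j::'k::finite \<Rightarrow> nat. \<forall>i. j i < c i} = (\<Prod>i\<in>UNIV. c i)"
  unfolding grid_eq_PiE by (subst card_PiE) auto

lemma sum_grid_eq_shifted_diagonals:
  fixes c :: "'k::finite \<Rightarrow> nat"
  assumes "m > 0" "\<And>i. c i > 0"
  shows "(\<Sum>j\<in>{j. \<forall>i. j i < c i}. F j)
    = (\<Sum>a\<in>{j. \<forall>i. j i < c i}. \<Sum>t<m. F (\<lambda>i. (a i + t) mod c i)) / m"
proof -
  have shift: "(\<Sum>a\<in>{j. \<forall>i. j i < c i}. F (\<lambda>i. (a i + t) mod c i)) = (\<Sum>j\<in>{j. \<forall>i. j i < c i}. F j)" for t
  proof (rule sum.reindex_bij_betw)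
    show "bij_betw (\<lambda>a i. (a i + t) mod c i) {j. \<forall>i. j i < c i} {j. \<forall>i. j i < c i}"
    proof (rule bij_betw_byWitness[where f'="\<lambda>j i. (j i + (c i - t mod c i)) mod c i"])
      show "\<forall>a\<in>{j. \<forall>i. j i < c i}. (\<lambda>i. ((a i + t) mod c i + (c i - t mod c i)) mod c i) = a"
        by (auto intro!: ext mod_add_rotate_back(1))
      show "\<forall>a\<in>{j. \<forall>i. j i < c i}. (\<lambda>i. ((a i + (c i - t mod c i)) mod c i + t) mod c i) = a"
        by (auto intro!: ext mod_add_rotate_back(2))
    qed (use assms(2) in auto)
  qed
  have "(\<Sum>a\<in>{j. \<forall>i. j i < c i}. \<Sum>t<m. F (\<lambda>i. (a i + t) mod c i))
      = (\<Sum>t<m. \<Sum>a\<in>{j. \<forall>i. j i < c i}. F (\<lambda>i. (a i + t) mod c i))"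
    by (rule sum.swap)
  also have "\<dots> = m * (\<Sum>j\<in>{j. \<forall>i. j i < c i}. F j)"
    by (simp add: shift)
  finally show ?thesis
    using assms(1) by simp
qed

section \<open>Separately exchangeable arrays\<close>

definition diag :: "nat \<Rightarrow> 'k \<Rightarrow> nat" where
  "diag t = (\<lambda>_. t)"

definition cell_sum :: "(real^'l \<Rightarrow> real) \<Rightarrow> nat \<times> (nat \<Rightarrow> real^'l) \<Rightarrow> real" where
  "cell_sum h c = (\<Sum>l<fst c. h (snd c l))"

lemma cell_sum_arr: "cell_sum h (arr N Y \<omega> j) = (\<Sum>l<N j \<omega>. h (Y j l \<omega>))"
  by (simp add: cell_sum_def arr_def)

lemma borel_measurable_cell_sum [measurable]:
  assumes [measurable]: "h \<in> borel_measurable borel"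
  shows "cell_sum h \<in> borel_measurable (cellM :: (nat \<times> (nat \<Rightarrow> real^'l)) measure)"
proof -
  have "(\<lambda>c. (\<lambda>n c. \<Sum>l<n. h (snd c l)) (fst c) c) \<in> borel_measurable (cellM :: (nat \<times> (nat \<Rightarrow> real^'l)) measure)"
    by (rule measurable_compose_countable) (simp_all add: cellM_def)
  then show ?thesis
    by (simp add: cell_sum_def[abs_def])
qed

lemma measurable_arrayM_component [measurable]: "j \<in> A \<Longrightarrow> (\<lambda>x. x j) \<in> arrayM A \<rightarrow>\<^sub>M cellM"
  unfolding arrayM_def by measurable

definition swap_blocks :: "nat \<Rightarrow> nat set \<Rightarrow> nat \<Rightarrow> nat" where
  "swap_blocks m E x = (if x \<in> E then m + x else if m \<le> x \<and> x - m \<in> E then x - m else x)"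

lemma bij_swap_blocks: "E \<subseteq> {..<m} \<Longrightarrow> bij (swap_blocks m E)"
  by (rule bij_betw_byWitness[where f'="swap_blocks m E"]) (auto simp: swap_blocks_def)

lemma swap_blocks_apply:
  assumes "E \<subseteq> {..<m}" "t < m"
  shows "swap_blocks m E t = (if t \<in> E then m + t else t)"
    and "swap_blocks m E (m + t) = (if t \<in> E then t else m + t)"
  using assms by (auto simp: swap_blocks_def)

locale sep_exch_array =
  fixes M :: "'w measure"
    and Ycal :: "(real^'l) set"
    and N :: "('k::finite \<Rightarrow> nat) \<Rightarrow> 'w \<Rightarrow> nat"
    and Y :: "('k \<Rightarrow> nat) \<Rightarrow> nat \<Rightarrow> 'w \<Rightarrow> real^'l"
  assumes M: "prob_space M"
    and N_meas: "\<And>j. N j \<in> M \<rightarrow>\<^sub>M count_space UNIV"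
    and Y_meas: "\<And>j l. Y j l \<in> borel_measurable M"
    and Y_in: "\<And>j l \<omega>. \<omega> \<in> space M \<Longrightarrow> Y j l \<omega> \<in> Ycal"
    and exch: "\<And>\<pi> :: 'k \<Rightarrow> nat \<Rightarrow> nat. (\<forall>i. bij (\<pi> i)) \<Longrightarrow>
        distr M (arrayM UNIV) (\<lambda>\<omega>. (\<lambda>j. arr N Y \<omega> (\<lambda>i. \<pi> i (j i))))
          = distr M (arrayM UNIV) (arr N Y)"
    and indep: "\<And>c :: 'k \<Rightarrow> nat. (\<forall>i. c i \<ge> 1) \<Longrightarrow>
        prob_space.indep_var M
          (arrayM {j. \<forall>i. j i < c i}) (\<lambda>\<omega>. restrict (arr N Y \<omega>) {j. \<forall>i. j i < c i})
          (arrayM {j. \<forall>i. j i \<ge> c i}) (\<lambda>\<omega>. restrict (arr N Y \<omega>) {j. \<forall>i. j i \<ge> c i})"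
begin

sublocale prob_space M
  by (rule M)

lemma measurable_cell [measurable]: "(\<lambda>\<omega>. arr N Y \<omega> j) \<in> M \<rightarrow>\<^sub>M cellM"
proof -
  have [measurable]: "N j \<in> M \<rightarrow>\<^sub>M count_space UNIV"
    by (rule N_meas)
  have [measurable]: "(\<lambda>\<omega> l. Y j l \<omega>) \<in> M \<rightarrow>\<^sub>M PiM UNIV (\<lambda>_. borel)"
    by (rule measurable_PiM_single') (auto intro: Y_meas)
  show ?thesis
    unfolding arr_def cellM_def by measurable
qed

lemma measurable_arr_reindex [measurable]: "(\<lambda>\<omega> j. arr N Y \<omega> (p j)) \<in> M \<rightarrow>\<^sub>M arrayM UNIV"
  unfolding arrayM_def
  by (rule measurable_PiM_single'[OF measurable_cell]) (simp add: cellM_def space_pair_measure space_PiM)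

lemma nn_integral_arr_permute:
  assumes "\<forall>i. bij (\<pi> i)" and [measurable]: "\<Psi> \<in> borel_measurable (arrayM UNIV)"
  shows "(\<integral>\<^sup>+\<omega>. \<Psi> (\<lambda>j. arr N Y \<omega> (\<lambda>i. \<pi> i (j i))) \<partial>M) = (\<integral>\<^sup>+\<omega>. \<Psi> (arr N Y \<omega>) \<partial>M)"
proof -
  have "(\<integral>\<^sup>+\<omega>. \<Psi> (\<lambda>j. arr N Y \<omega> (\<lambda>i. \<pi> i (j i))) \<partial>M)
      = (\<integral>\<^sup>+x. \<Psi> x \<partial>distr M (arrayM UNIV) (\<lambda>\<omega> j. arr N Y \<omega> (\<lambda>i. \<pi> i (j i))))"
    by (rule nn_integral_distr[symmetric]) measurable
  also have "\<dots> = (\<integral>\<^sup>+\<omega>. \<Psi> (arr N Y \<omega>) \<partial>M)"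
    by (simp add: exch[OF assms(1)] nn_integral_distr)
  finally show ?thesis .
qed

lemma integral_arr_permute:
  fixes \<Psi> :: "_ \<Rightarrow> real"
  assumes "\<forall>i. bij (\<pi> i)" and [measurable]: "\<Psi> \<in> borel_measurable (arrayM UNIV)"
  shows "(\<integral>\<omega>. \<Psi> (\<lambda>j. arr N Y \<omega> (\<lambda>i. \<pi> i (j i))) \<partial>M) = (\<integral>\<omega>. \<Psi> (arr N Y \<omega>) \<partial>M)"
proof -
  have "(\<integral>\<omega>. \<Psi> (\<lambda>j. arr N Y \<omega> (\<lambda>i. \<pi> i (j i))) \<partial>M)
      = (\<integral>x. \<Psi> x \<partial>distr M (arrayM UNIV) (\<lambda>\<omega> j. arr N Y \<omega> (\<lambda>i. \<pi> i (j i))))"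
    by (rule integral_distr[symmetric]) measurable
  also have "\<dots> = (\<integral>\<omega>. \<Psi> (arr N Y \<omega>) \<partial>M)"
    by (simp add: exch[OF assms(1)] integral_distr)
  finally show ?thesis .
qed

lemma nn_integral_diag_cell:
  assumes [measurable]: "\<psi> \<in> borel_measurable cellM"
  shows "(\<integral>\<^sup>+\<omega>. \<psi> (arr N Y \<omega> (diag t)) \<partial>M) = (\<integral>\<^sup>+\<omega>. \<psi> (arr N Y \<omega> (diag 0)) \<partial>M)"
  using nn_integral_arr_permute[of "\<lambda>_. Transposition.transpose 0 t" "\<lambda>x. \<psi> (x (diag 0))"]
  by (simp add: diag_def)

lemma integral_diag_cell:
  fixes \<psi> :: "_ \<Rightarrow> real"
  assumes [measurable]: "\<psi> \<in> borel_measurable cellM"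
  shows "(\<integral>\<omega>. \<psi> (arr N Y \<omega> (diag t)) \<partial>M) = (\<integral>\<omega>. \<psi> (arr N Y \<omega> (diag 0)) \<partial>M)"
  using integral_arr_permute[of "\<lambda>_. Transposition.transpose 0 t" "\<lambda>x. \<psi> (x (diag 0))"]
  by (simp add: diag_def)

definition diag_sum :: "(real^'l \<Rightarrow> real) \<Rightarrow> nat \<Rightarrow> 'w \<Rightarrow> real" where
  "diag_sum h t \<omega> = cell_sum h (arr N Y \<omega> (diag t))"

lemma diag_sum_eq: "diag_sum h t \<omega> = (\<Sum>l<N (diag t) \<omega>. h (Y (diag t) l \<omega>))"
  by (simp add: diag_sum_def cell_sum_def arr_def)

lemma borel_measurable_diag_sum [measurable]:
  "h \<in> borel_measurable borel \<Longrightarrow> diag_sum h t \<in> borel_measurable M"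
  unfolding diag_sum_def by (rule measurable_compose[OF measurable_cell borel_measurable_cell_sum])

lemma diag_sum_nonneg: "\<omega> \<in> space M \<Longrightarrow> (\<And>y. y \<in> Ycal \<Longrightarrow> g y \<ge> 0) \<Longrightarrow> diag_sum g t \<omega> \<ge> 0"
  unfolding diag_sum_eq by (intro sum_nonneg) (auto intro: Y_in)

lemma abs_diag_sum_le:
  assumes "\<omega> \<in> space M" "\<And>y. y \<in> Ycal \<Longrightarrow> \<bar>h y\<bar> \<le> w y"
  shows "\<bar>diag_sum h t \<omega>\<bar> \<le> diag_sum w t \<omega>"
  unfolding diag_sum_eq using assms Y_in by (intro order.trans[OF sum_abs sum_mono]) auto

lemma diag_sum_diff: "diag_sum (\<lambda>y. h y - f y) t \<omega> = diag_sum h t \<omega> - diag_sum f t \<omega>"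
  by (simp add: diag_sum_eq sum_subtractf)

lemma diag_sum_scale: "diag_sum (\<lambda>y. a * h y) t \<omega> = a * diag_sum h t \<omega>"
  by (simp add: diag_sum_eq sum_distrib_left)

lemma integrable_diag_sum:
  assumes [measurable]: "g \<in> borel_measurable borel" and "integrable M (diag_sum g 0)"
  shows "integrable M (diag_sum g t)"
proof -
  have "(\<integral>\<^sup>+\<omega>. ennreal (norm (diag_sum g t \<omega>)) \<partial>M) = (\<integral>\<^sup>+\<omega>. ennreal (norm (diag_sum g 0 \<omega>)) \<partial>M)"
    unfolding diag_sum_def by (rule nn_integral_diag_cell) measurable
  with assms(2) show ?thesis
    by (simp add: integrable_iff_bounded)
qed

lemma expectation_diag_sum:
  "g \<in> borel_measurable borel \<Longrightarrow> expectation (diag_sum g t) = expectation (diag_sum g 0)"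
  unfolding diag_sum_def by (rule integral_diag_cell) measurable

definition grid_dev :: "(real^'l \<Rightarrow> real) set \<Rightarrow> ('k \<Rightarrow> nat) \<Rightarrow> ennreal" where
  "grid_dev F c = (\<integral>\<^sup>+\<omega>. (SUP f\<in>F. ennreal \<bar>
       (\<Sum>j\<in>{j. \<forall>i. j i < c i}. \<Sum>l<N j \<omega>. f (Y j l \<omega>)) / real (\<Prod>i\<in>UNIV. c i)
       - expectation (\<lambda>\<omega>'. \<Sum>l<N (\<lambda>_. 0) \<omega>'. f (Y (\<lambda>_. 0) l \<omega>'))\<bar>) \<partial>M)"

end

section \<open>Maximal inequality along the diagonal\<close>

text \<open>H stands in for Fc: being countable and Borel, it makes all suprema below measurable.\<close>
locale sep_exch_array_class = sep_exch_array M Ycal N Y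
  for M :: "'w measure"
    and Ycal :: "(real^'l) set"
    and N :: "('k::finite \<Rightarrow> nat) \<Rightarrow> 'w \<Rightarrow> nat"
    and Y :: "('k \<Rightarrow> nat) \<Rightarrow> nat \<Rightarrow> 'w \<Rightarrow> real^'l" +
  fixes Fc H :: "(real^'l \<Rightarrow> real) set" and Fb :: "real^'l \<Rightarrow> real"
  assumes H_countable: "countable H"
    and H_borel: "\<And>h. h \<in> H \<Longrightarrow> h \<in> borel_measurable borel"
    and H_represents: "\<And>h. h \<in> H \<Longrightarrow> \<exists>f\<in>Fc. \<forall>y\<in>Ycal. h y = f y"
    and H_dense: "\<And>f. f \<in> Fc \<Longrightarrow> \<exists>g. (\<forall>k. g k \<in> H) \<and> (\<forall>y\<in>Ycal. (\<lambda>k. g k y) \<longlonglongrightarrow> f y)"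
    and Fb_borel [measurable]: "Fb \<in> borel_measurable borel"
    and Fb_envelope: "\<And>f y. f \<in> Fc \<Longrightarrow> y \<in> Ycal \<Longrightarrow> \<bar>f y\<bar> \<le> Fb y"
    and Fb_nonneg: "\<And>y. y \<in> Ycal \<Longrightarrow> 0 \<le> Fb y"
    and Fb_integrable: "integrable M (diag_sum Fb 0)"
begin

lemma H_envelope: "h \<in> H \<Longrightarrow> y \<in> Ycal \<Longrightarrow> \<bar>h y\<bar> \<le> Fb y"
  using H_represents Fb_envelope by fastforce

lemma diag_sum_Fb_nonneg: "\<omega> \<in> space M \<Longrightarrow> 0 \<le> diag_sum Fb t \<omega>"
  by (rule diag_sum_nonneg) (auto intro: Fb_nonneg)

lemma abs_diag_sum_H_le: "h \<in> H \<Longrightarrow> \<omega> \<in> space M \<Longrightarrow> \<bar>diag_sum h t \<omega>\<bar> \<le> diag_sum Fb t \<omega>"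
  by (rule abs_diag_sum_le) (auto intro: H_envelope)

lemma integrable_diag_sum_Fb: "integrable M (diag_sum Fb t)"
  by (rule integrable_diag_sum[OF Fb_borel Fb_integrable])

lemma integrable_diag_sum_H: "h \<in> H \<Longrightarrow> integrable M (diag_sum h t)"
  using H_borel diag_sum_Fb_nonneg abs_diag_sum_H_le
  by (intro Bochner_Integration.integrable_bound[OF integrable_diag_sum_Fb]) (auto intro!: AE_I2)

definition mean :: "(real^'l \<Rightarrow> real) \<Rightarrow> real" where
  "mean h = expectation (diag_sum h 0)"

lemma mean_eq: "mean h = expectation (\<lambda>\<omega>. \<Sum>l<N (\<lambda>_. 0) \<omega>. h (Y (\<lambda>_. 0) l \<omega>))"
  by (simp add: mean_def diag_sum_eq[abs_def] diag_def)

lemma expectation_diag_sum_H: "h \<in> H \<Longrightarrow> expectation (diag_sum h t) = mean h"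
  unfolding mean_def by (rule expectation_diag_sum) (rule H_borel)

definition diag_dev :: "nat \<Rightarrow> ennreal" where
  "diag_dev m = (\<integral>\<^sup>+\<omega>. (SUP h\<in>H. ennreal \<bar>(\<Sum>t<m. diag_sum h t \<omega>) / m - mean h\<bar>) \<partial>M)"

lemma diag_dev_le_symmetrized:
  assumes m: "m > 0"
  shows "diag_dev m
      \<le> (\<integral>\<^sup>+\<omega>. (SUP h\<in>H. ennreal (\<bar>\<Sum>t<m. diag_sum h t \<omega> - diag_sum h (m + t) \<omega>\<bar> / m)) \<partial>M)"
proof -
  define A where "A = {j::'k \<Rightarrow> nat. \<forall>i. j i < m}"
  define B where "B = {j::'k \<Rightarrow> nat. \<forall>i. j i \<ge> m}"
  define a where "a h x = (\<Sum>t<m. cell_sum h (x (diag t))) / m"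
    for h and x :: "('k \<Rightarrow> nat) \<Rightarrow> nat \<times> (nat \<Rightarrow> real^'l)"
  define b where "b h x = (\<Sum>t<m. cell_sum h (x (diag (m + t)))) / m"
    for h and x :: "('k \<Rightarrow> nat) \<Rightarrow> nat \<times> (nat \<Rightarrow> real^'l)"
  have a_eq: "a h (restrict (arr N Y \<omega>) A) = (\<Sum>t<m. diag_sum h t \<omega>) / m" for h \<omega>
    by (simp add: a_def A_def diag_def diag_sum_def)
  have b_eq: "b h (restrict (arr N Y \<omega>) B) = (\<Sum>t<m. diag_sum h (m + t) \<omega>) / m" for h \<omega>
    by (simp add: b_def B_def diag_def diag_sum_def)
  have b_mean: "expectation (\<lambda>\<omega>. b h (restrict (arr N Y \<omega>) B)) = mean h" if "h \<in> H" for h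
    using m integrable_diag_sum_H[OF that]
    by (simp add: b_eq Bochner_Integration.integral_sum expectation_diag_sum_H[OF that])
  have "diag_dev m = (\<integral>\<^sup>+\<omega>. (SUP h\<in>H. ennreal \<bar>a h (restrict (arr N Y \<omega>) A)
          - expectation (\<lambda>\<omega>'. b h (restrict (arr N Y \<omega>') B))\<bar>) \<partial>M)"
    unfolding diag_dev_def by (intro nn_integral_cong SUP_cong) (simp_all add: a_eq b_mean)
  also have "\<dots> \<le> (\<integral>\<^sup>+\<omega>. (SUP h\<in>H. ennreal \<bar>a h (restrict (arr N Y \<omega>) A) - b h (restrict (arr N Y \<omega>) B)\<bar>) \<partial>M)"
  proof (rule nn_integral_SUP_centered_le_indep[OF _ H_countable,
        where X="\<lambda>\<omega>. restrict (arr N Y \<omega>) A" and Z="\<lambda>\<omega>. restrict (arr N Y \<omega>) B"])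
    show "indep_var (arrayM A) (\<lambda>\<omega>. restrict (arr N Y \<omega>) A) (arrayM B) (\<lambda>\<omega>. restrict (arr N Y \<omega>) B)"
      using indep[of "\<lambda>_. m"] m by (simp add: A_def B_def)
    fix h assume h: "h \<in> H"
    note [measurable] = borel_measurable_cell_sum[OF H_borel[OF h]]
    show "a h \<in> borel_measurable (arrayM A)" "b h \<in> borel_measurable (arrayM B)"
      unfolding a_def b_def by (auto simp: A_def B_def diag_def)
    show "integrable M (\<lambda>\<omega>. b h (restrict (arr N Y \<omega>) B))"
      unfolding b_eq using integrable_diag_sum_H[OF h] by auto
  qed
  also have "\<dots> = (\<integral>\<^sup>+\<omega>. (SUP h\<in>H. ennreal (\<bar>\<Sum>t<m. diag_sum h t \<omega> - diag_sum h (m + t) \<omega>\<bar> / m)) \<partial>M)"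
    using m by (simp add: a_eq b_eq sum_subtractf diff_divide_distrib[symmetric])
  finally show ?thesis .
qed

text \<open>Exchanging the diagonal cells t and m + t for all t in E does not change the law of the
  array, so the symmetrized deviation is also the average over all sign patterns.\<close>
lemma symmetrized_eq_sign_average:
  shows "(\<integral>\<^sup>+\<omega>. (SUP h\<in>H. ennreal (\<bar>\<Sum>t<m. diag_sum h t \<omega> - diag_sum h (m + t) \<omega>\<bar> / m)) \<partial>M)
    = (\<integral>\<^sup>+\<omega>. (\<Sum>E\<in>Pow {..<m}. SUP h\<in>H.
          ennreal (\<bar>\<Sum>t<m. sign_flip E t * (diag_sum h t \<omega> - diag_sum h (m + t) \<omega>)\<bar> / m)) / 2 ^ m \<partial>M)"
proof -
  define \<Psi> :: "(('k \<Rightarrow> nat) \<Rightarrow> nat \<times> (nat \<Rightarrow> real^'l)) \<Rightarrow> ennreal" where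
    "\<Psi> x = (SUP h\<in>H. ennreal (\<bar>\<Sum>t<m. cell_sum h (x (diag t)) - cell_sum h (x (diag (m + t)))\<bar> / m))" for x
  have [measurable]: "\<Psi> \<in> borel_measurable (arrayM UNIV)"
    unfolding \<Psi>_def[abs_def]
  proof (rule borel_measurable_SUP[OF H_countable])
    fix h assume "h \<in> H"
    note [measurable] = borel_measurable_cell_sum[OF H_borel[OF this]]
    show "(\<lambda>x. ennreal (\<bar>\<Sum>t<m. cell_sum h (x (diag t)) - cell_sum h (x (diag (m + t)))\<bar> / m))
        \<in> borel_measurable (arrayM UNIV)"
      by measurable
  qed
  have swapped: "\<Psi> (\<lambda>j. arr N Y \<omega> (\<lambda>i. swap_blocks m E (j i)))
      = (SUP h\<in>H. ennreal (\<bar>\<Sum>t<m. sign_flip E t * (diag_sum h t \<omega> - diag_sum h (m + t) \<omega>)\<bar> / m))"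
    if E: "E \<in> Pow {..<m}" for E \<omega>
    using E unfolding \<Psi>_def
    by (intro SUP_cong refl arg_cong[where f="\<lambda>x. ennreal (\<bar>x\<bar> / m)"] sum.cong)
       (auto simp: diag_sum_def diag_def swap_blocks_apply sign_flip_def)
  have "(\<integral>\<^sup>+\<omega>. (\<Sum>E\<in>Pow {..<m}. SUP h\<in>H.
          ennreal (\<bar>\<Sum>t<m. sign_flip E t * (diag_sum h t \<omega> - diag_sum h (m + t) \<omega>)\<bar> / m)) / 2 ^ m \<partial>M)
      = (\<integral>\<^sup>+\<omega>. (\<Sum>E\<in>Pow {..<m}. \<Psi> (\<lambda>j. arr N Y \<omega> (\<lambda>i. swap_blocks m E (j i)))) / 2 ^ m \<partial>M)"
    by (simp add: swapped)
  also have "\<dots> = (\<integral>\<^sup>+\<omega>. (\<Sum>E\<in>Pow {..<m}. \<Psi> (\<lambda>j. arr N Y \<omega> (\<lambda>i. swap_blocks m E (j i)))) \<partial>M) / 2 ^ m"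
    by (rule nn_integral_divide) measurable
  also have "\<dots> = (\<Sum>E\<in>Pow {..<m}. \<integral>\<^sup>+\<omega>. \<Psi> (\<lambda>j. arr N Y \<omega> (\<lambda>i. swap_blocks m E (j i))) \<partial>M) / 2 ^ m"
    by (subst nn_integral_sum) auto
  also have "\<dots> = (\<Sum>E\<in>Pow {..<m}. \<integral>\<^sup>+\<omega>. \<Psi> (arr N Y \<omega>) \<partial>M) / 2 ^ m"
    by (intro arg_cong2[where f="(/)"] sum.cong refl nn_integral_arr_permute) (auto intro: bij_swap_blocks)
  also have "\<dots> = (\<integral>\<^sup>+\<omega>. \<Psi> (arr N Y \<omega>) \<partial>M)"
    by (simp add: card_Pow ennreal_power_mult_divide_cancel)
  finally show ?thesis
    by (simp add: \<Psi>_def diag_sum_def)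
qed

definition truncated_diag_sum :: "real \<Rightarrow> (real^'l \<Rightarrow> real) \<Rightarrow> nat \<Rightarrow> 'w \<Rightarrow> real" where
  "truncated_diag_sum K h t \<omega> = (if diag_sum Fb t \<omega> \<le> K then diag_sum h t \<omega> else 0)"

definition diag_tail :: "real \<Rightarrow> nat \<Rightarrow> 'w \<Rightarrow> real" where
  "diag_tail K t \<omega> = (if diag_sum Fb t \<omega> \<le> K then 0 else diag_sum Fb t \<omega>)"

definition truncated_cover :: "real \<Rightarrow> nat \<Rightarrow> nat \<Rightarrow> real \<Rightarrow> 'w \<Rightarrow> bool" where
  "truncated_cover K m B r \<omega> \<longleftrightarrow> (\<exists>V. finite V \<and> card V \<le> B \<and> (\<forall>c\<in>V. \<forall>t<2 * m. \<bar>c t\<bar> \<le> K) \<and>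
     (\<forall>h\<in>H. \<exists>c\<in>V. (\<Sum>t<2 * m. \<bar>truncated_diag_sum K h t \<omega> - c t\<bar>) \<le> m * r))"

lemma sign_average_le_truncated_cover:
  assumes m: "m > 0" and K: "K > 0" and \<delta>: "\<delta> > 0" and r: "r \<ge> 0" and \<omega>: "\<omega> \<in> space M"
    and cover: "truncated_cover K m B r \<omega>"
  shows "(\<Sum>E\<in>Pow {..<m}. SUP h\<in>H.
        ennreal (\<bar>\<Sum>t<m. sign_flip E t * (diag_sum h t \<omega> - diag_sum h (m + t) \<omega>)\<bar> / m)) / 2 ^ m
    \<le> ennreal ((\<Sum>t<2 * m. diag_tail K t \<omega>) / m + r + \<delta> + 2 * K * (2 * real B * exp (- real m * \<delta>\<^sup>2 / (8 * K\<^sup>2))))"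
proof -
  obtain V where V: "finite V" "card V \<le> B" "\<And>c t. c \<in> V \<Longrightarrow> t < 2 * m \<Longrightarrow> \<bar>c t\<bar> \<le> K"
    "\<And>h. h \<in> H \<Longrightarrow> \<exists>c\<in>V. (\<Sum>t<2 * m. \<bar>truncated_diag_sum K h t \<omega> - c t\<bar>) \<le> m * r"
    using cover unfolding truncated_cover_def by blast
  have "(\<Sum>E\<in>Pow {..<m}. SUP h\<in>H.
        ennreal (\<bar>\<Sum>t<m. sign_flip E t * (diag_sum h t \<omega> - diag_sum h (m + t) \<omega>)\<bar> / m))
    \<le> ennreal (2 ^ m * ((\<Sum>t<2 * m. diag_tail K t \<omega>) / m + r + \<delta>
          + 2 * K * (2 * card V * exp (- real m * \<delta>\<^sup>2 / (8 * K\<^sup>2)))))"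
    using sum_SUP_sign_flip_le[OF m K \<delta> V(1) r, where a="\<lambda>h t. diag_sum h t \<omega>" and env="\<lambda>t. diag_sum Fb t \<omega>" and G=H]
      diag_sum_Fb_nonneg[OF \<omega>] abs_diag_sum_H_le[OF _ \<omega>] V(3,4)
    by (simp add: truncated_diag_sum_def diag_tail_def)
  also have "\<dots> \<le> ennreal (2 ^ m * ((\<Sum>t<2 * m. diag_tail K t \<omega>) / m + r + \<delta>
          + 2 * K * (2 * real B * exp (- real m * \<delta>\<^sup>2 / (8 * K\<^sup>2)))))"
    using V(2) K by (intro ennreal_leI mult_left_mono add_left_mono mult_right_mono) auto
  also have "\<dots> = 2 ^ m * ennreal ((\<Sum>t<2 * m. diag_tail K t \<omega>) / m + r + \<delta>
          + 2 * K * (2 * real B * exp (- real m * \<delta>\<^sup>2 / (8 * K\<^sup>2))))"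
    using ennreal_power[of 2 m] by (simp add: ennreal_mult')
  finally have "(\<Sum>E\<in>Pow {..<m}. SUP h\<in>H.
        ennreal (\<bar>\<Sum>t<m. sign_flip E t * (diag_sum h t \<omega> - diag_sum h (m + t) \<omega>)\<bar> / m)) / 2 ^ m
    \<le> 2 ^ m * ennreal ((\<Sum>t<2 * m. diag_tail K t \<omega>) / m + r + \<delta>
          + 2 * K * (2 * real B * exp (- real m * \<delta>\<^sup>2 / (8 * K\<^sup>2)))) / 2 ^ m"
    by (rule divide_right_mono_ennreal)
  then show ?thesis
    by (simp only: ennreal_power_mult_divide_cancel)
qed

lemma borel_measurable_diag_tail [measurable]: "diag_tail K t \<in> borel_measurable M"
  unfolding diag_tail_def[abs_def] by measurable

lemma integrable_diag_tail: "integrable M (diag_tail K t)"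
  using diag_sum_Fb_nonneg
  by (intro Bochner_Integration.integrable_bound[OF integrable_diag_sum_Fb]) (auto simp: diag_tail_def intro!: AE_I2)

lemma expectation_diag_tail: "expectation (diag_tail K t) = expectation (diag_tail K 0)"
  unfolding diag_tail_def[abs_def] diag_sum_def by (rule integral_diag_cell) measurable

lemma diag_dev_le:
  assumes m: "m > 0" and K: "K > 0" and \<delta>: "\<delta> > 0"
    and \<rho>_int: "integrable M \<rho>" and \<rho>_nonneg: "\<And>\<omega>. \<omega> \<in> space M \<Longrightarrow> \<rho> \<omega> \<ge> 0"
    and cover: "\<And>\<omega>. \<omega> \<in> space M \<Longrightarrow> truncated_cover K m B (\<rho> \<omega>) \<omega>"
  shows "diag_dev m \<le> ennreal (2 * expectation (diag_tail K 0) + expectation \<rho> + \<delta>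
                  + 2 * K * (2 * B * exp (- real m * \<delta>\<^sup>2 / (8 * K\<^sup>2))))"
proof -
  define c where "c = \<delta> + 2 * K * (2 * B * exp (- real m * \<delta>\<^sup>2 / (8 * K\<^sup>2)))"
  define R where "R \<omega> = (\<Sum>t<2 * m. diag_tail K t \<omega>) / m + \<rho> \<omega> + c" for \<omega>
  have R_int: "integrable M R"
    unfolding R_def using integrable_diag_tail \<rho>_int by auto
  have R_nonneg: "R \<omega> \<ge> 0" if "\<omega> \<in> space M" for \<omega>
    unfolding R_def c_def using \<rho>_nonneg[OF that] K \<delta> diag_sum_Fb_nonneg[OF that]
    by (intro add_nonneg_nonneg divide_nonneg_nonneg sum_nonneg) (auto simp: diag_tail_def)
  have "diag_dev m \<le> (\<integral>\<^sup>+\<omega>. (\<Sum>E\<in>Pow {..<m}. SUP h\<in>H.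
          ennreal (\<bar>\<Sum>t<m. sign_flip E t * (diag_sum h t \<omega> - diag_sum h (m + t) \<omega>)\<bar> / m)) / 2 ^ m \<partial>M)"
    using diag_dev_le_symmetrized[OF m] unfolding symmetrized_eq_sign_average .
  also have "\<dots> \<le> (\<integral>\<^sup>+\<omega>. ennreal (R \<omega>) \<partial>M)"
  proof (rule nn_integral_mono)
    fix \<omega> assume \<omega>: "\<omega> \<in> space M"
    from sign_average_le_truncated_cover[OF m K \<delta> \<rho>_nonneg[OF \<omega>] \<omega> cover[OF \<omega>]]
    show "(\<Sum>E\<in>Pow {..<m}. SUP h\<in>H.
          ennreal (\<bar>\<Sum>t<m. sign_flip E t * (diag_sum h t \<omega> - diag_sum h (m + t) \<omega>)\<bar> / m)) / 2 ^ m
        \<le> ennreal (R \<omega>)"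
      by (simp add: R_def c_def add.assoc)
  qed
  also have "\<dots> = ennreal (expectation R)"
    using R_nonneg by (intro nn_integral_eq_integral R_int) (auto intro: AE_I2)
  also have "expectation R = (\<Sum>t<2 * m. expectation (diag_tail K t)) / m + expectation \<rho> + c"
    unfolding R_def using integrable_diag_tail \<rho>_int prob_space
    by (simp add: Bochner_Integration.integral_sum)
  also have "(\<Sum>t<2 * m. expectation (diag_tail K t)) / m = 2 * expectation (diag_tail K 0)"
    using m by (subst sum.cong[OF refl expectation_diag_tail]) simp
  finally show ?thesis
    by (simp add: c_def add.assoc)
qed

lemma diag_tail_small:
  assumes "e > 0"
  obtains K where "K > 0" "expectation (diag_tail K 0) < e"
proof -
  have "(\<lambda>n. expectation (diag_tail (real (Suc n)) 0)) \<longlonglongrightarrow> expectation (\<lambda>\<omega>. 0)"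
  proof (rule integral_dominated_convergence[where w="diag_sum Fb 0"])
    show "AE \<omega> in M. (\<lambda>n. diag_tail (real (Suc n)) 0 \<omega>) \<longlonglongrightarrow> 0"
    proof (rule AE_I2)
      fix \<omega>
      obtain n0 :: nat where "diag_sum Fb 0 \<omega> \<le> real n0"
        using real_arch_simple by blast
      then have "\<forall>\<^sub>F n in sequentially. diag_tail (real (Suc n)) 0 \<omega> = 0"
        unfolding eventually_sequentially by (intro exI[of _ n0]) (auto simp: diag_tail_def)
      then show "(\<lambda>n. diag_tail (real (Suc n)) 0 \<omega>) \<longlonglongrightarrow> 0"
        by (rule tendsto_eventually)
    qed
    show "AE \<omega> in M. norm (diag_tail (real (Suc n)) 0 \<omega>) \<le> diag_sum Fb 0 \<omega>" for n
      using diag_sum_Fb_nonneg by (auto simp: diag_tail_def intro!: AE_I2)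
  qed (auto simp: diag_tail_def Fb_integrable)
  then have "\<forall>\<^sub>F n in sequentially. expectation (diag_tail (real (Suc n)) 0) < e"
    using assms by (intro order_tendstoD(2)) auto
  then obtain n where "expectation (diag_tail (real (Suc n)) 0) < e"
    by (auto simp: eventually_sequentially)
  then show ?thesis
    by (intro that[of "real (Suc n)"]) auto
qed

definition has_truncated_covers :: bool where
  "has_truncated_covers \<longleftrightarrow> (\<forall>K>0. \<forall>e>0. \<exists>(B::nat) (\<rho>::nat \<Rightarrow> 'w \<Rightarrow> real). \<forall>m>0.
     integrable M (\<rho> m) \<and> (\<forall>\<omega>\<in>space M. \<rho> m \<omega> \<ge> 0) \<and> expectation (\<rho> m) \<le> e \<and>
     (\<forall>\<omega>\<in>space M. truncated_cover K m B (\<rho> m \<omega>) \<omega>))"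

lemma diag_dev_tendsto_zero:
  assumes covers: has_truncated_covers
  shows "diag_dev \<longlonglongrightarrow> 0"
  \<comment> \<open>Apply diag_dev_le with a tail below e/8, covers of mean scale e/4 and \<delta> = e/4.\<close>
proof (rule order_tendstoI)
  fix a :: ennreal assume "0 < a"
  then obtain b where b: "0 < b" "b < a"
    using dense by blast
  then obtain e where e: "e > 0" "ennreal e < a"
    by (cases b) (auto simp: ennreal_less_zero_iff)
  obtain K where K: "K > 0" "expectation (diag_tail K 0) < e / 8"
    using diag_tail_small[of "e / 8"] e by auto
  obtain B \<rho> where B: "\<And>m. m > 0 \<Longrightarrow> integrable M (\<rho> m) \<and> (\<forall>\<omega>\<in>space M. \<rho> m \<omega> \<ge> 0)
      \<and> expectation (\<rho> m) \<le> e / 4 \<and> (\<forall>\<omega>\<in>space M. truncated_cover K m B (\<rho> m \<omega>) \<omega>)"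
    using covers K(1) e(1) unfolding has_truncated_covers_def by (metis divide_pos_pos zero_less_numeral)
  define q where "q = exp (- ((e / 4)\<^sup>2 / (8 * K\<^sup>2)))"
  have q_power: "exp (- real m * (e / 4)\<^sup>2 / (8 * K\<^sup>2)) = q ^ m" for m
    unfolding q_def by (subst exp_of_nat_mult[symmetric]) (simp add: field_simps)
  have "norm q < 1"
    using e K by (simp add: q_def)
  then have "(\<lambda>m. 2 * K * (2 * real B * exp (- real m * (e / 4)\<^sup>2 / (8 * K\<^sup>2)))) \<longlonglongrightarrow> 2 * K * (2 * real B * 0)"
    unfolding q_power by (intro tendsto_intros LIMSEQ_power_zero)
  then have "\<forall>\<^sub>F m in sequentially. 2 * K * (2 * real B * exp (- real m * (e / 4)\<^sup>2 / (8 * K\<^sup>2))) < e / 4"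
    by (rule order_tendstoD(2)) (use e in simp)
  then show "\<forall>\<^sub>F m in sequentially. diag_dev m < a"
    using eventually_gt_at_top[of 0]
  proof eventually_elim
    case (elim m)
    have "diag_dev m \<le> ennreal (2 * expectation (diag_tail K 0) + expectation (\<rho> m) + e / 4
                  + 2 * K * (2 * real B * exp (- real m * (e / 4)\<^sup>2 / (8 * K\<^sup>2))))"
      using B[OF elim(2)] e by (intro diag_dev_le[OF elim(2) K(1)]) auto
    also have "\<dots> < ennreal e"
      using K(2) B[OF elim(2)] elim(1) e by (intro ennreal_lessI) auto
    finally show ?case
      using e(2) by simp
  qed
qed simp

section \<open>Truncated covers from the entropy conditions\<close>

lemma truncated_coverI:
  fixes K r :: real
  assumes G: "finite G" "card G \<le> B" "\<And>f y. f \<in> G \<Longrightarrow> y \<in> Ycal \<Longrightarrow> \<bar>f y\<bar> \<le> Fb y"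
    and \<omega>: "\<omega> \<in> space M" and K: "K \<ge> 0"
    and approx: "\<And>h. h \<in> H \<Longrightarrow>
      \<exists>f\<in>G. (\<Sum>t<2 * m. \<bar>truncated_diag_sum K h t \<omega> - truncated_diag_sum K f t \<omega>\<bar>) \<le> m * r"
  shows "truncated_cover K m B r \<omega>"
  unfolding truncated_cover_def
proof (intro exI[of _ "(\<lambda>f t. truncated_diag_sum K f t \<omega>) ` G"] conjI ballI allI impI)
  show "finite ((\<lambda>f t. truncated_diag_sum K f t \<omega>) ` G)" "card ((\<lambda>f t. truncated_diag_sum K f t \<omega>) ` G) \<le> B"
    using G card_image_le[OF G(1)] by (auto intro: order.trans)
  fix c t assume "c \<in> (\<lambda>f t. truncated_diag_sum K f t \<omega>) ` G"
  then obtain f where "f \<in> G" "c = (\<lambda>t. truncated_diag_sum K f t \<omega>)"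
    by auto
  then show "\<bar>c t\<bar> \<le> K"
    using abs_diag_sum_le[OF \<omega>, of f Fb t] G(3) K by (auto simp: truncated_diag_sum_def)
qed (use approx in auto)

lemma truncated_cover_of_uniform_net:
  fixes K \<epsilon> :: real
  assumes \<omega>: "\<omega> \<in> space M" and K: "K > 0" and m: "m > 0" and \<epsilon>: "\<epsilon> \<ge> 0"
    and w_nonneg: "\<And>y. y \<in> Ycal \<Longrightarrow> w y \<ge> 0"
    and G: "finite G" "\<And>f y. f \<in> G \<Longrightarrow> y \<in> Ycal \<Longrightarrow> \<bar>f y\<bar> \<le> Fb y"
    and net: "\<And>h. h \<in> H \<Longrightarrow> \<exists>f\<in>G. \<forall>y\<in>Ycal. \<bar>h y - f y\<bar> \<le> \<epsilon> * w y"
  shows "truncated_cover K m (card G) (\<epsilon> * (\<Sum>t<2 * m. diag_sum w t \<omega>) / m) \<omega>"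
proof (rule truncated_coverI[where G=G])
  fix h assume "h \<in> H"
  then obtain f where f: "f \<in> G" "\<And>y. y \<in> Ycal \<Longrightarrow> \<bar>h y - f y\<bar> \<le> \<epsilon> * w y"
    using net by blast
  have "\<bar>truncated_diag_sum K h t \<omega> - truncated_diag_sum K f t \<omega>\<bar> \<le> \<epsilon> * diag_sum w t \<omega>" for t
    using abs_diag_sum_le[OF \<omega> f(2), where t=t] \<epsilon> diag_sum_nonneg[OF \<omega> w_nonneg, where t=t]
    by (auto simp: truncated_diag_sum_def diag_sum_diff diag_sum_scale)
  then have "(\<Sum>t<2 * m. \<bar>truncated_diag_sum K h t \<omega> - truncated_diag_sum K f t \<omega>\<bar>)
      \<le> (\<Sum>t<2 * m. \<epsilon> * diag_sum w t \<omega>)"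
    by (rule sum_mono)
  also have "\<dots> = m * (\<epsilon> * (\<Sum>t<2 * m. diag_sum w t \<omega>) / m)"
    using m by (simp add: sum_distrib_left[symmetric])
  finally show "\<exists>f\<in>G. (\<Sum>t<2 * m. \<bar>truncated_diag_sum K h t \<omega> - truncated_diag_sum K f t \<omega>\<bar>)
      \<le> m * (\<epsilon> * (\<Sum>t<2 * m. diag_sum w t \<omega>) / m)"
    using f(1) by blast
qed (use G \<omega> K in auto)

lemma has_truncated_covers_of_uniform_nets:
  assumes [measurable]: "w \<in> borel_measurable borel"
    and w_nonneg: "\<And>y. y \<in> Ycal \<Longrightarrow> w y \<ge> 0" and w_int: "integrable M (diag_sum w 0)"
    and nets: "\<And>\<epsilon>. \<epsilon> > 0 \<Longrightarrow> \<exists>G. finite G \<and> (\<forall>f\<in>G. \<forall>y\<in>Ycal. \<bar>f y\<bar> \<le> Fb y) \<and>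
                  (\<forall>h\<in>H. \<exists>f\<in>G. \<forall>y\<in>Ycal. \<bar>h y - f y\<bar> \<le> \<epsilon> * w y)"
  shows has_truncated_covers
  unfolding has_truncated_covers_def
proof (intro allI impI)
  fix K e :: real assume K: "K > 0" and e: "e > 0"
  define Ew where "Ew = expectation (diag_sum w 0)"
  have Ew: "Ew \<ge> 0"
    unfolding Ew_def using diag_sum_nonneg w_nonneg by (intro integral_nonneg_AE AE_I2) auto
  define \<epsilon> where "\<epsilon> = e / (2 * (Ew + 1))"
  have \<epsilon>: "\<epsilon> > 0"
    using e Ew by (simp add: \<epsilon>_def)
  obtain G where G: "finite G" "\<And>f y. f \<in> G \<Longrightarrow> y \<in> Ycal \<Longrightarrow> \<bar>f y\<bar> \<le> Fb y"
      "\<And>h. h \<in> H \<Longrightarrow> \<exists>f\<in>G. \<forall>y\<in>Ycal. \<bar>h y - f y\<bar> \<le> \<epsilon> * w y"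
    using nets[OF \<epsilon>] by blast
  define \<rho> where "\<rho> m \<omega> = \<epsilon> * (\<Sum>t<2 * m. diag_sum w t \<omega>) / m" for m \<omega>
  have w_int': "integrable M (diag_sum w t)" "expectation (diag_sum w t) = Ew" for t
    using integrable_diag_sum[OF _ w_int] expectation_diag_sum[of w t] by (auto simp: Ew_def)
  have "integrable M (\<rho> m) \<and> (\<forall>\<omega>\<in>space M. \<rho> m \<omega> \<ge> 0) \<and> expectation (\<rho> m) \<le> e \<and>
      (\<forall>\<omega>\<in>space M. truncated_cover K m (card G) (\<rho> m \<omega>) \<omega>)" if m: "m > 0" for m
  proof (intro conjI ballI)
    show "integrable M (\<rho> m)"
      unfolding \<rho>_def[abs_def] using w_int' by auto
    show "\<rho> m \<omega> \<ge> 0" if "\<omega> \<in> space M" for \<omega>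
      unfolding \<rho>_def using \<epsilon> diag_sum_nonneg[OF that w_nonneg]
      by (intro divide_nonneg_nonneg mult_nonneg_nonneg sum_nonneg) auto
    have "expectation (\<rho> m) = 2 * \<epsilon> * Ew"
      unfolding \<rho>_def[abs_def] using w_int' m by (simp add: Bochner_Integration.integral_sum)
    also have "\<dots> = e * (Ew / (Ew + 1))"
      using Ew by (simp add: \<epsilon>_def field_simps)
    also have "\<dots> \<le> e"
      using e Ew by (intro mult_left_le) auto
    finally show "expectation (\<rho> m) \<le> e" .
    show "truncated_cover K m (card G) (\<rho> m \<omega>) \<omega>" if "\<omega> \<in> space M" for \<omega>
      unfolding \<rho>_def using that K m \<epsilon> w_nonneg G by (intro truncated_cover_of_uniform_net) auto
  qed
  then show "\<exists>(B::nat) (\<rho>::nat \<Rightarrow> 'w \<Rightarrow> real). \<forall>m>0. integrable M (\<rho> m) \<and> (\<forall>\<omega>\<in>space M. \<rho> m \<omega> \<ge> 0) \<and>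
      expectation (\<rho> m) \<le> e \<and> (\<forall>\<omega>\<in>space M. truncated_cover K m B (\<rho> m \<omega>) \<omega>)"
    by blast
qed

lemma has_truncated_covers_weighted:
  fixes \<beta> W :: real
  assumes Fe: "\<And>y. y \<in> Ycal \<Longrightarrow> Fb y = Fe y" and W: "W \<ge> 0" "wsup_norm Ycal \<beta> Fe = ereal W"
    and weight_int: "integrable M (diag_sum (\<lambda>y. (1 + (norm y)\<^sup>2) powr (- \<beta> / 2)) 0)"
    and cover: "\<forall>\<eta>>0. covering_number (ereal \<eta> * wsup_norm Ycal \<beta> Fe) Fc
                  (\<lambda>f g. wsup_norm Ycal \<beta> (\<lambda>y. f y - g y)) < \<infinity>"
  shows has_truncated_covers
proof (rule has_truncated_covers_of_uniform_nets[where w="\<lambda>y. W * (1 + (norm y)\<^sup>2) powr (- \<beta> / 2)"])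
  have "diag_sum (\<lambda>y. W * (1 + (norm y)\<^sup>2) powr (- \<beta> / 2)) 0
      = (\<lambda>\<omega>. W * diag_sum (\<lambda>y. (1 + (norm y)\<^sup>2) powr (- \<beta> / 2)) 0 \<omega>)"
    by (rule ext) (rule diag_sum_scale)
  then show "integrable M (diag_sum (\<lambda>y. W * (1 + (norm y)\<^sup>2) powr (- \<beta> / 2)) 0)"
    using weight_int by simp
  fix \<epsilon> :: real assume "\<epsilon> > 0"
  then have "covering_number (ereal \<epsilon> * wsup_norm Ycal \<beta> Fe) Fc (\<lambda>f g. wsup_norm Ycal \<beta> (\<lambda>y. f y - g y)) < \<infinity>"
    using cover by blast
  then obtain G0 where G0: "finite G0" "G0 \<subseteq> Fc"
      "\<And>f. f \<in> Fc \<Longrightarrow> \<exists>g\<in>G0. wsup_norm Ycal \<beta> (\<lambda>y. f y - g y) \<le> ereal \<epsilon> * wsup_norm Ycal \<beta> Fe"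
    by (erule covering_number_finiteE)
  have "\<exists>f\<in>G0. \<forall>y\<in>Ycal. \<bar>h y - f y\<bar> \<le> \<epsilon> * (W * (1 + (norm y)\<^sup>2) powr (- \<beta> / 2))" if h: "h \<in> H" for h
  proof -
    obtain g where g: "g \<in> Fc" "\<And>y. y \<in> Ycal \<Longrightarrow> h y = g y"
      using H_represents[OF h] by blast
    then obtain f where f: "f \<in> G0" "wsup_norm Ycal \<beta> (\<lambda>y. g y - f y) \<le> ereal (\<epsilon> * W)"
      using G0(3)[OF g(1)] W(2) by auto
    have "\<bar>h y - f y\<bar> \<le> \<epsilon> * (W * (1 + (norm y)\<^sup>2) powr (- \<beta> / 2))" if "y \<in> Ycal" for y
      using abs_le_wsup_norm[OF that f(2)] g(2)[OF that] by (simp add: mult.assoc)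
    with f(1) show ?thesis
      by blast
  qed
  moreover have "\<forall>f\<in>G0. \<forall>y\<in>Ycal. \<bar>f y\<bar> \<le> Fb y"
    using G0(2) Fb_envelope by blast
  ultimately show "\<exists>G0. finite G0 \<and> (\<forall>f\<in>G0. \<forall>y\<in>Ycal. \<bar>f y\<bar> \<le> Fb y) \<and>
      (\<forall>h\<in>H. \<exists>f\<in>G0. \<forall>y\<in>Ycal. \<bar>h y - f y\<bar> \<le> \<epsilon> * (W * (1 + (norm y)\<^sup>2) powr (- \<beta> / 2)))"
    using G0(1) by blast
next
  show "(\<lambda>y. W * (1 + (norm y)\<^sup>2) powr (- \<beta> / 2)) \<in> borel_measurable borel"
    by measurable
  show "\<And>y. 0 \<le> W * (1 + (norm y)\<^sup>2) powr (- \<beta> / 2)"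
    using W(1) by simp
qed

definition light_cells :: "real \<Rightarrow> nat \<Rightarrow> 'w \<Rightarrow> nat set" where
  "light_cells K m \<omega> = {t. t < 2 * m \<and> diag_sum Fb t \<omega> \<le> K}"

definition light_obs :: "real \<Rightarrow> nat \<Rightarrow> 'w \<Rightarrow> (nat \<times> nat) set" where
  "light_obs K m \<omega> = (SIGMA t:light_cells K m \<omega>. {..<N (diag t) \<omega>})"

definition obs :: "'w \<Rightarrow> nat \<times> nat \<Rightarrow> real^'l" where
  "obs \<omega> p = Y (diag (fst p)) (snd p) \<omega>"

lemma finite_light_obs: "finite (light_obs K m \<omega>)"
  by (simp add: light_obs_def light_cells_def)

lemma sum_light_obs: "(\<Sum>p\<in>light_obs K m \<omega>. g (obs \<omega> p)) = (\<Sum>t\<in>light_cells K m \<omega>. diag_sum g t \<omega>)"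
  by (simp add: light_obs_def light_cells_def obs_def diag_sum_eq sum.Sigma case_prod_beta)

lemma truncated_dist_le_light_obs:
  assumes \<omega>: "\<omega> \<in> space M"
  shows "(\<Sum>t<2 * m. \<bar>truncated_diag_sum K h t \<omega> - truncated_diag_sum K f t \<omega>\<bar>)
      \<le> (\<Sum>p\<in>light_obs K m \<omega>. \<bar>h (obs \<omega> p) - f (obs \<omega> p)\<bar>)"
proof -
  have cells: "{..<2 * m} \<inter> light_cells K m \<omega> = light_cells K m \<omega>"
    by (auto simp: light_cells_def)
  have "(\<Sum>t<2 * m. \<bar>truncated_diag_sum K h t \<omega> - truncated_diag_sum K f t \<omega>\<bar>)
      = (\<Sum>t<2 * m. if t \<in> light_cells K m \<omega> then \<bar>diag_sum (\<lambda>y. h y - f y) t \<omega>\<bar> else 0)"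
    by (intro sum.cong) (auto simp: truncated_diag_sum_def light_cells_def diag_sum_diff)
  also have "\<dots> = (\<Sum>t\<in>light_cells K m \<omega>. \<bar>diag_sum (\<lambda>y. h y - f y) t \<omega>\<bar>)"
    using sum.inter_restrict[of "{..<2 * m}" "\<lambda>t. \<bar>diag_sum (\<lambda>y. h y - f y) t \<omega>\<bar>" "light_cells K m \<omega>"]
    by (simp add: cells)
  also have "\<dots> \<le> (\<Sum>t\<in>light_cells K m \<omega>. diag_sum (\<lambda>y. \<bar>h y - f y\<bar>) t \<omega>)"
    by (intro sum_mono abs_diag_sum_le[OF \<omega>]) simp
  finally show ?thesis
    using sum_light_obs[of "\<lambda>y. \<bar>h y - f y\<bar>"] by simp
qed

lemma sum_envelope_light_obs_le:
  assumes \<omega>: "\<omega> \<in> space M" and K: "K \<ge> 0"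
  shows "(\<Sum>p\<in>light_obs K m \<omega>. \<bar>Fb (obs \<omega> p)\<bar>) \<le> 2 * real m * K"
proof -
  have "(\<Sum>p\<in>light_obs K m \<omega>. \<bar>Fb (obs \<omega> p)\<bar>) = (\<Sum>p\<in>light_obs K m \<omega>. Fb (obs \<omega> p))"
    using Fb_nonneg Y_in[OF \<omega>] by (intro sum.cong) (auto simp: obs_def)
  also have "\<dots> = (\<Sum>t\<in>light_cells K m \<omega>. diag_sum Fb t \<omega>)"
    by (rule sum_light_obs)
  also have "\<dots> \<le> card (light_cells K m \<omega>) * K"
    by (rule sum_bounded_above) (simp add: light_cells_def)
  also have "\<dots> \<le> 2 * real m * K"
  proof -
    have "card (light_cells K m \<omega>) \<le> card {..<2 * m}"
      by (intro card_mono) (auto simp: light_cells_def)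
    then show ?thesis
      using K by (simp add: mult_right_mono)
  qed
  finally show ?thesis .
qed

text \<open>The L1(Q) nets are used for the empirical measure Q of the observations in the light
  cells; if there are none, all truncated sums vanish.\<close>
lemma truncated_cover_of_empirical_nets:
  fixes K \<eta> :: real
  assumes \<omega>: "\<omega> \<in> space M" and K: "K > 0" and \<eta>: "\<eta> \<ge> 0"
    and nets: "\<And>Q. finite (set_pmf Q) \<Longrightarrow> set_pmf Q \<subseteq> Ycal \<Longrightarrow>
       \<exists>G. finite G \<and> card G \<le> B \<and> (\<forall>f\<in>G. \<forall>y\<in>Ycal. \<bar>f y\<bar> \<le> Fb y) \<and>
          (\<forall>h\<in>H. \<exists>f\<in>G. L1Q Q (\<lambda>y. h y - f y) \<le> \<eta> * L1Q Q Fb)"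
  shows "truncated_cover K m (max B 1) (2 * K * \<eta>) \<omega>"
proof (cases "light_obs K m \<omega> = {}")
  case True
  show ?thesis
  proof (rule truncated_coverI[where G="{Fb}"])
    fix h assume "h \<in> H"
    have "(\<Sum>t<2 * m. \<bar>truncated_diag_sum K h t \<omega> - truncated_diag_sum K Fb t \<omega>\<bar>) \<le> 0"
      using truncated_dist_le_light_obs[OF \<omega>, where m=m and K=K and h=h and f=Fb] True by simp
    also have "0 \<le> m * (2 * K * \<eta>)"
      using K \<eta> by simp
    finally show "\<exists>f\<in>{Fb}. (\<Sum>t<2 * m. \<bar>truncated_diag_sum K h t \<omega> - truncated_diag_sum K f t \<omega>\<bar>)
        \<le> m * (2 * K * \<eta>)"
      by blast
  qed (use \<omega> K Fb_nonneg in auto)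
next
  case False
  define I where "I = light_obs K m \<omega>"
  define Q where "Q = map_pmf (obs \<omega>) (pmf_of_set I)"
  have I: "finite I" "I \<noteq> {}" "card I > 0"
    using False finite_light_obs by (auto simp: I_def card_gt_0_iff)
  have L1Q_Q: "L1Q Q g = (\<Sum>p\<in>I. \<bar>g (obs \<omega> p)\<bar>) / card I" for g
    unfolding Q_def using I(1,2) by (rule L1Q_map_pmf_of_set)
  have Q: "finite (set_pmf Q)" "set_pmf Q \<subseteq> Ycal"
    using I Y_in[OF \<omega>] by (auto simp: Q_def obs_def)
  obtain G where G: "finite G" "card G \<le> B" "\<And>f y. f \<in> G \<Longrightarrow> y \<in> Ycal \<Longrightarrow> \<bar>f y\<bar> \<le> Fb y"
      "\<And>h. h \<in> H \<Longrightarrow> \<exists>f\<in>G. L1Q Q (\<lambda>y. h y - f y) \<le> \<eta> * L1Q Q Fb"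
    using nets[OF Q] by blast
  show ?thesis
  proof (rule truncated_coverI[where G=G])
    fix h assume "h \<in> H"
    then obtain f where f: "f \<in> G" "L1Q Q (\<lambda>y. h y - f y) \<le> \<eta> * L1Q Q Fb"
      using G(4) by blast
    have "(\<Sum>t<2 * m. \<bar>truncated_diag_sum K h t \<omega> - truncated_diag_sum K f t \<omega>\<bar>)
        \<le> card I * L1Q Q (\<lambda>y. h y - f y)"
      using truncated_dist_le_light_obs[OF \<omega>, where m=m and K=K and h=h and f=f] I
      by (simp add: L1Q_Q I_def)
    also have "\<dots> \<le> \<eta> * (\<Sum>p\<in>I. \<bar>Fb (obs \<omega> p)\<bar>)"
      using mult_left_mono[OF f(2), of "card I"] I by (simp add: L1Q_Q)
    also have "\<dots> \<le> m * (2 * K * \<eta>)"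
      using mult_left_mono[OF sum_envelope_light_obs_le[OF \<omega> less_imp_le[OF K], where m=m] \<eta>]
      by (simp add: I_def algebra_simps)
    finally show "\<exists>f\<in>G. (\<Sum>t<2 * m. \<bar>truncated_diag_sum K h t \<omega> - truncated_diag_sum K f t \<omega>\<bar>)
        \<le> m * (2 * K * \<eta>)"
      using f(1) by blast
  next
    show "card G \<le> max B 1"
      using G(2) by simp
  qed (use G(1,3) \<omega> K in simp_all)
qed

lemma has_truncated_covers_L1:
  assumes Fe: "\<And>y. y \<in> Ycal \<Longrightarrow> Fb y = Fe y"
    and cover: "\<forall>\<eta>>0. \<exists>B::nat. \<forall>Q::(real^'l) pmf. finite (set_pmf Q) \<and> set_pmf Q \<subseteq> Ycal \<longrightarrow>
        covering_number (ereal (\<eta> * L1Q Q Fe)) Fc (\<lambda>f g. ereal (L1Q Q (\<lambda>y. f y - g y))) \<le> enat B"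
  shows has_truncated_covers
  unfolding has_truncated_covers_def
proof (intro allI impI)
  fix K e :: real assume K: "K > 0" and e: "e > 0"
  define \<eta> where "\<eta> = e / (2 * K)"
  have \<eta>: "\<eta> > 0"
    using e K by (simp add: \<eta>_def)
  then obtain B :: nat where B: "\<And>Q. finite (set_pmf Q) \<Longrightarrow> set_pmf Q \<subseteq> Ycal \<Longrightarrow>
      covering_number (ereal (\<eta> * L1Q Q Fe)) Fc (\<lambda>f g. ereal (L1Q Q (\<lambda>y. f y - g y))) \<le> enat B"
    using cover by blast
  have nets: "\<exists>G. finite G \<and> card G \<le> B \<and> (\<forall>f\<in>G. \<forall>y\<in>Ycal. \<bar>f y\<bar> \<le> Fb y) \<and>
      (\<forall>h\<in>H. \<exists>f\<in>G. L1Q Q (\<lambda>y. h y - f y) \<le> \<eta> * L1Q Q Fb)"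
    if Q: "finite (set_pmf Q)" "set_pmf Q \<subseteq> Ycal" for Q
  proof -
    obtain G where G: "finite G" "G \<subseteq> Fc"
        "\<And>f. f \<in> Fc \<Longrightarrow> \<exists>g\<in>G. ereal (L1Q Q (\<lambda>y. f y - g y)) \<le> ereal (\<eta> * L1Q Q Fe)" "card G \<le> B"
      using covering_number_le_enatE[OF B[OF Q]] by blast
    have Fb_Fe: "L1Q Q Fb = L1Q Q Fe"
      using Q Fe by (intro L1Q_cong) auto
    have "\<exists>f\<in>G. L1Q Q (\<lambda>y. h y - f y) \<le> \<eta> * L1Q Q Fb" if h: "h \<in> H" for h
    proof -
      obtain g where g: "g \<in> Fc" "\<And>y. y \<in> Ycal \<Longrightarrow> h y = g y"
        using H_represents[OF h] by blast
      then obtain f where f: "f \<in> G" "L1Q Q (\<lambda>y. g y - f y) \<le> \<eta> * L1Q Q Fe"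
        using G(3) by auto
      have "L1Q Q (\<lambda>y. h y - f y) = L1Q Q (\<lambda>y. g y - f y)"
        using Q g(2) by (intro L1Q_cong) auto
      with f Fb_Fe show ?thesis
        by (metis order.refl)
    qed
    moreover have "\<forall>f\<in>G. \<forall>y\<in>Ycal. \<bar>f y\<bar> \<le> Fb y"
      using G(2) Fb_envelope by blast
    ultimately show ?thesis
      using G(1,4) by blast
  qed
  have "truncated_cover K m (max B 1) e \<omega>" if "\<omega> \<in> space M" for m \<omega>
    using truncated_cover_of_empirical_nets[OF that K less_imp_le[OF \<eta>] nets] K
    by (simp add: \<eta>_def)
  then show "\<exists>(B::nat) (\<rho>::nat \<Rightarrow> 'w \<Rightarrow> real). \<forall>m>0. integrable M (\<rho> m) \<and> (\<forall>\<omega>\<in>space M. \<rho> m \<omega> \<ge> 0) \<and>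
      expectation (\<rho> m) \<le> e \<and> (\<forall>\<omega>\<in>space M. truncated_cover K m B (\<rho> m \<omega>) \<omega>)"
    using e by (intro exI[of _ "max B 1"] exI[of _ "\<lambda>_ _. e"]) (simp add: prob_space)
qed

section \<open>From the diagonal to the grid\<close>

definition block_dev :: "nat \<Rightarrow> (('k \<Rightarrow> nat) \<Rightarrow> nat \<times> (nat \<Rightarrow> real^'l)) \<Rightarrow> ennreal" where
  "block_dev m x = (SUP h\<in>H. ennreal \<bar>(\<Sum>t<m. cell_sum h (x (diag t))) / m - mean h\<bar>)"

lemma borel_measurable_block_dev [measurable]: "block_dev m \<in> borel_measurable (arrayM UNIV)"
  unfolding block_dev_def[abs_def]
proof (rule borel_measurable_SUP[OF H_countable])
  fix h assume "h \<in> H"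
  note [measurable] = borel_measurable_cell_sum[OF H_borel[OF this]]
  show "(\<lambda>x. ennreal \<bar>(\<Sum>t<m. cell_sum h (x (diag t))) / m - mean h\<bar>) \<in> borel_measurable (arrayM UNIV)"
    by measurable
qed

lemma nn_integral_block_dev_rotated:
  assumes "\<And>i. c i > 0"
  shows "(\<integral>\<^sup>+\<omega>. block_dev m (\<lambda>j. arr N Y \<omega> (\<lambda>i. rotate_below (c i) (a i) (j i))) \<partial>M) = diag_dev m"
  using assms
  by (subst nn_integral_arr_permute) (auto intro: bij_rotate_below simp: block_dev_def diag_dev_def diag_sum_def)

lemma block_dev_rotated_eq:
  assumes "\<And>i. m \<le> c i"
  shows "block_dev m (\<lambda>j. arr N Y \<omega> (\<lambda>i. rotate_below (c i) (a i) (j i)))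
    = (SUP h\<in>H. ennreal \<bar>(\<Sum>t<m. cell_sum h (arr N Y \<omega> (\<lambda>i. (a i + t) mod c i))) / m - mean h\<bar>)"
proof -
  have "(\<lambda>i. rotate_below (c i) (a i) (diag t i)) = (\<lambda>i. (a i + t) mod c i)" if "t < m" for t
  proof
    fix i
    have "t < c i"
      using that assms[of i] by linarith
    then show "rotate_below (c i) (a i) (diag t i) = (a i + t) mod c i"
      by (simp add: rotate_below_def diag_def)
  qed
  then show ?thesis
    unfolding block_dev_def by (intro SUP_cong refl arg_cong[where f="\<lambda>x. ennreal \<bar>x / m - _\<bar>"] sum.cong) auto
qed

text \<open>The grid average is an average of m-step averages along cyclically shifted diagonals; each
  of those has, by exchangeability, the same law as the average along the main diagonal.\<close>
lemma grid_dev_H_le_diag_dev: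
  assumes m: "m > 0" and c: "\<And>i. m \<le> c i"
  shows "grid_dev H c \<le> diag_dev m"
proof -
  define G where "G = {j::'k \<Rightarrow> nat. \<forall>i. j i < c i}"
  define n where "n = real (\<Prod>i\<in>UNIV. c i)"
  define S where "S a \<omega> = block_dev m (\<lambda>j. arr N Y \<omega> (\<lambda>i. rotate_below (c i) (a i) (j i)))" for a \<omega>
  have c_pos: "c i > 0" for i
    using m c[of i] by linarith
  have n: "n > 0" "card G = n"
    using c_pos by (simp_all add: n_def G_def card_grid prod_pos)
  have pointwise: "(SUP h\<in>H. ennreal \<bar>(\<Sum>j\<in>G. cell_sum h (arr N Y \<omega> j)) / n - mean h\<bar>)
      \<le> (\<Sum>a\<in>G. S a \<omega>) / ennreal n" for \<omega>
  proof (rule SUP_least)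
    fix h assume h: "h \<in> H"
    define shifted where "shifted a = (\<Sum>t<m. cell_sum h (arr N Y \<omega> (\<lambda>i. (a i + t) mod c i))) / m - mean h"
      for a :: "'k \<Rightarrow> nat"
    have "(\<Sum>j\<in>G. cell_sum h (arr N Y \<omega> j)) / n - mean h = (\<Sum>a\<in>G. shifted a) / n"
      using sum_grid_eq_shifted_diagonals[OF m c_pos, of "\<lambda>j. cell_sum h (arr N Y \<omega> j)"] n
      by (simp add: G_def shifted_def sum_subtractf sum_divide_distrib[symmetric] field_simps)
    then have "ennreal \<bar>(\<Sum>j\<in>G. cell_sum h (arr N Y \<omega> j)) / n - mean h\<bar> \<le> ennreal ((\<Sum>a\<in>G. \<bar>shifted a\<bar>) / n)"
      using n by (intro ennreal_leI) (simp add: divide_right_mono sum_abs)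
    also have "\<dots> = (\<Sum>a\<in>G. ennreal \<bar>shifted a\<bar>) / ennreal n"
      using n by (simp add: divide_ennreal[symmetric] sum_nonneg)
    also have "\<dots> \<le> (\<Sum>a\<in>G. S a \<omega>) / ennreal n"
      unfolding S_def block_dev_rotated_eq[OF c] shifted_def using h
      by (intro divide_right_mono_ennreal sum_mono SUP_upper)
    finally show "ennreal \<bar>(\<Sum>j\<in>G. cell_sum h (arr N Y \<omega> j)) / n - mean h\<bar> \<le> (\<Sum>a\<in>G. S a \<omega>) / ennreal n" .
  qed
  have "grid_dev H c \<le> (\<integral>\<^sup>+\<omega>. (\<Sum>a\<in>G. S a \<omega>) / ennreal n \<partial>M)"
    unfolding grid_dev_def using pointwise
    by (intro nn_integral_mono) (simp add: G_def n_def cell_sum_arr mean_eq)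
  also have "\<dots> = (\<Sum>a\<in>G. \<integral>\<^sup>+\<omega>. S a \<omega> \<partial>M) / ennreal n"
    by (simp add: S_def nn_integral_divide nn_integral_sum)
  also have "\<dots> = ennreal n * diag_dev m / ennreal n"
    using n c_pos by (simp add: S_def nn_integral_block_dev_rotated ennreal_of_nat_eq_real_of_nat)
  also have "\<dots> = diag_dev m"
    using n(1) by (metis ennreal_mult_divide_eq ennreal_eq_0_iff ennreal_neq_top mult.commute not_le)
  finally show ?thesis .
qed

lemma mean_tendsto:
  assumes g: "\<And>k. g k \<in> H" and lim: "\<And>y. y \<in> Ycal \<Longrightarrow> (\<lambda>k. g k y) \<longlonglongrightarrow> f y"
  shows "(\<lambda>k. mean (g k)) \<longlonglongrightarrow> expectation (\<lambda>\<omega>. \<Sum>l<N (\<lambda>_. 0) \<omega>. f (Y (\<lambda>_. 0) l \<omega>))"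
proof -
  define F where "F \<omega> = (\<Sum>l<N (\<lambda>_. 0) \<omega>. f (Y (\<lambda>_. 0) l \<omega>))" for \<omega>
  have diag_lim: "(\<lambda>k. diag_sum (g k) 0 \<omega>) \<longlonglongrightarrow> F \<omega>" if "\<omega> \<in> space M" for \<omega>
    unfolding F_def diag_sum_eq diag_def using Y_in[OF that] by (intro tendsto_sum lim) auto
  have "(\<lambda>k. expectation (diag_sum (g k) 0)) \<longlonglongrightarrow> expectation F"
  proof (rule integral_dominated_convergence[where w="diag_sum Fb 0"])
    show "F \<in> borel_measurable M"
      by (rule borel_measurable_LIMSEQ_real[OF diag_lim]) (use H_borel[OF g] in measurable)
    show "AE \<omega> in M. (\<lambda>k. diag_sum (g k) 0 \<omega>) \<longlonglongrightarrow> F \<omega>"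
      using diag_lim by (rule AE_I2)
    show "AE \<omega> in M. norm (diag_sum (g k) 0 \<omega>) \<le> diag_sum Fb 0 \<omega>" for k
      using abs_diag_sum_H_le[OF g] by (auto intro!: AE_I2)
  qed (use H_borel[OF g] Fb_integrable in simp_all)
  then show ?thesis
    unfolding mean_def F_def .
qed

lemma grid_dev_le_grid_dev_H: "grid_dev Fc c \<le> grid_dev H c"
  unfolding grid_dev_def
proof (intro nn_integral_mono SUP_least)
  fix \<omega> f assume \<omega>: "\<omega> \<in> space M" and f: "f \<in> Fc"
  obtain g where g: "\<And>k. g k \<in> H" "\<And>y. y \<in> Ycal \<Longrightarrow> (\<lambda>k. g k y) \<longlonglongrightarrow> f y"
    using H_dense[OF f] by blast
  define G where "G = {j::'k \<Rightarrow> nat. \<forall>i. j i < c i}"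
  define avg where "avg h = (\<Sum>j\<in>G. \<Sum>l<N j \<omega>. h (Y j l \<omega>)) / real (\<Prod>i\<in>UNIV. c i)" for h
  have "(\<lambda>k. avg (g k)) \<longlonglongrightarrow> avg f"
    unfolding avg_def divide_inverse using Y_in[OF \<omega>] by (intro tendsto_mult_right tendsto_sum g(2))
  then have lim: "(\<lambda>k. ennreal \<bar>avg (g k) - mean (g k)\<bar>)
      \<longlonglongrightarrow> ennreal \<bar>avg f - expectation (\<lambda>\<omega>. \<Sum>l<N (\<lambda>_. 0) \<omega>. f (Y (\<lambda>_. 0) l \<omega>))\<bar>"
    by (intro tendsto_ennrealI tendsto_intros mean_tendsto g)
  have "ennreal \<bar>avg f - expectation (\<lambda>\<omega>. \<Sum>l<N (\<lambda>_. 0) \<omega>. f (Y (\<lambda>_. 0) l \<omega>))\<bar>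
      \<le> (SUP h\<in>H. ennreal \<bar>avg h - mean h\<bar>)"
    by (rule LIMSEQ_le_const2[OF lim], rule exI[of _ 0]) (auto intro: SUP_upper g(1))
  then show "ennreal \<bar>(\<Sum>j\<in>{j. \<forall>i. j i < c i}. \<Sum>l<N j \<omega>. f (Y j l \<omega>)) / real (\<Prod>i\<in>UNIV. c i)
        - expectation (\<lambda>\<omega>'. \<Sum>l<N (\<lambda>_. 0) \<omega>'. f (Y (\<lambda>_. 0) l \<omega>'))\<bar>
      \<le> (SUP h\<in>H. ennreal \<bar>(\<Sum>j\<in>{j. \<forall>i. j i < c i}. \<Sum>l<N j \<omega>. h (Y j l \<omega>)) / real (\<Prod>i\<in>UNIV. c i)
        - expectation (\<lambda>\<omega>'. \<Sum>l<N (\<lambda>_. 0) \<omega>'. h (Y (\<lambda>_. 0) l \<omega>'))\<bar>)"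
    by (simp add: avg_def G_def mean_eq)
qed

lemma grid_dev_tendsto_zero:
  assumes covers: has_truncated_covers
    and C_lim: "filterlim (\<lambda>n. Min (range (C n))) at_top sequentially"
  shows "(\<lambda>n. grid_dev Fc (C n)) \<longlonglongrightarrow> 0"
proof (rule tendsto_sandwich[OF _ _ tendsto_const])
  show "(\<lambda>n. diag_dev (Min (range (C n)))) \<longlonglongrightarrow> 0"
    by (rule filterlim_compose[OF diag_dev_tendsto_zero[OF covers] C_lim])
  have "\<forall>\<^sub>F n in sequentially. Min (range (C n)) \<ge> 1"
    using C_lim by (simp add: filterlim_at_top)
  then show "\<forall>\<^sub>F n in sequentially. grid_dev Fc (C n) \<le> diag_dev (Min (range (C n)))"
  proof eventually_elim
    case (elim n)
    have "grid_dev Fc (C n) \<le> grid_dev H (C n)"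
      by (rule grid_dev_le_grid_dev_H)
    also have "\<dots> \<le> diag_dev (Min (range (C n)))"
    proof (rule grid_dev_H_le_diag_dev)
      show "0 < Min (range (C n))"
        using elim by linarith
    qed (simp add: Min_le)
    finally show ?case .
  qed
qed simp

end

context sep_exch_array
begin

lemma integrable_diag_sum_extension:
  assumes [measurable]: "g \<in> borel_measurable borel"
    and g: "\<And>y. y \<in> Ycal \<Longrightarrow> 0 \<le> g y" "\<And>y. y \<in> Ycal \<Longrightarrow> g y = f y"
    and f_int: "(\<integral>\<^sup>+\<omega>. ennreal (\<Sum>l<N (\<lambda>_. 0) \<omega>. f (Y (\<lambda>_. 0) l \<omega>)) \<partial>M) < \<infinity>"
  shows "integrable M (diag_sum g 0)"
proof (rule integrableI_bounded)
  have "(\<integral>\<^sup>+\<omega>. ennreal (norm (diag_sum g 0 \<omega>)) \<partial>M)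
      = (\<integral>\<^sup>+\<omega>. ennreal (\<Sum>l<N (\<lambda>_. 0) \<omega>. f (Y (\<lambda>_. 0) l \<omega>)) \<partial>M)"
  proof (rule nn_integral_cong)
    fix \<omega> assume \<omega>: "\<omega> \<in> space M"
    have "0 \<le> diag_sum g 0 \<omega>"
      by (rule diag_sum_nonneg[OF \<omega> g(1)])
    then show "ennreal (norm (diag_sum g 0 \<omega>)) = ennreal (\<Sum>l<N (\<lambda>_. 0) \<omega>. f (Y (\<lambda>_. 0) l \<omega>))"
      using Y_in[OF \<omega>] by (simp add: diag_sum_eq diag_def g(2))
  qed
  with f_int show "(\<integral>\<^sup>+\<omega>. ennreal (norm (diag_sum g 0 \<omega>)) \<partial>M) < \<infinity>"
    by simp
qed simp

lemma obtain_sep_exch_array_class: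
  assumes pm: "pointwise_measurable Ycal Fc" and "Fc \<noteq> {}" and env: "envelope Ycal Fc Fe"
    and Fe_int: "(\<integral>\<^sup>+\<omega>. ennreal (\<Sum>l<N (\<lambda>_. 0) \<omega>. Fe (Y (\<lambda>_. 0) l \<omega>)) \<partial>M) < \<infinity>"
  obtains H Fb where "sep_exch_array_class M Ycal N Y Fc H Fb" "\<And>y. y \<in> Ycal \<Longrightarrow> Fb y = Fe y"
proof -
  have Fe_env: "\<And>f y. f \<in> Fc \<Longrightarrow> y \<in> Ycal \<Longrightarrow> \<bar>f y\<bar> \<le> Fe y"
    using env by (simp add: envelope_def)
  have "Fe \<in> borel_measurable (restrict_space borel Ycal)"
    using env by (simp add: envelope_def)
  then obtain Fb where Fb [measurable]: "Fb \<in> borel_measurable borel" and Fb_Fe: "\<And>y. y \<in> Ycal \<Longrightarrow> Fb y = Fe y"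
    by (erule borel_measurable_restrict_space_extend)
  have Fb_nonneg: "0 \<le> Fb y" if "y \<in> Ycal" for y
  proof -
    obtain f where "f \<in> Fc"
      using \<open>Fc \<noteq> {}\<close> by blast
    from Fe_env[OF this that] show ?thesis
      using Fb_Fe[OF that] by simp
  qed
  have Fb_int: "integrable M (diag_sum Fb 0)"
    using Fb Fb_nonneg Fb_Fe Fe_int by (rule integrable_diag_sum_extension)
  from pm show ?thesis
  proof (rule pointwise_measurable_countable_borel_class)
    fix H assume "countable H" "\<And>h. h \<in> H \<Longrightarrow> h \<in> borel_measurable borel"
      "\<And>h. h \<in> H \<Longrightarrow> \<exists>f\<in>Fc. \<forall>y\<in>Ycal. h y = f y"
      "\<And>f. f \<in> Fc \<Longrightarrow> \<exists>g. (\<forall>k. g k \<in> H) \<and> (\<forall>y\<in>Ycal. (\<lambda>k. g k y) \<longlonglongrightarrow> f y)"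
    then have "sep_exch_array_class M Ycal N Y Fc H Fb"
      using Fb_int Fb_Fe Fe_env Fb_nonneg by unfold_locales (simp_all add: Fb)
    then show ?thesis
      using Fb_Fe by (rule that)
  qed
qed

lemma grid_dev_tendsto_zero_L1:
  assumes C_lim: "filterlim (\<lambda>n. Min (range (C n))) at_top sequentially"
    and pm: "pointwise_measurable Ycal Fc" and "Fc \<noteq> {}" and env: "envelope Ycal Fc Fe"
    and Fe_int: "(\<integral>\<^sup>+\<omega>. ennreal (\<Sum>l<N (\<lambda>_. 0) \<omega>. Fe (Y (\<lambda>_. 0) l \<omega>)) \<partial>M) < \<infinity>"
    and cover: "\<forall>\<eta>>0. \<exists>B::nat. \<forall>Q::(real^'l) pmf. finite (set_pmf Q) \<and> set_pmf Q \<subseteq> Ycal \<longrightarrow>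
        covering_number (ereal (\<eta> * L1Q Q Fe)) Fc (\<lambda>f g. ereal (L1Q Q (\<lambda>y. f y - g y))) \<le> enat B"
  shows "(\<lambda>n. grid_dev Fc (C n)) \<longlonglongrightarrow> 0"
proof (rule obtain_sep_exch_array_class[OF pm \<open>Fc \<noteq> {}\<close> env Fe_int])
  fix H Fb assume setup_H_Fb: "sep_exch_array_class M Ycal N Y Fc H Fb"
    and Fb_Fe: "\<And>y. y \<in> Ycal \<Longrightarrow> Fb y = Fe y"
  interpret sep_exch_array_class M Ycal N Y Fc H Fb
    by (fact setup_H_Fb)
  show ?thesis
    using has_truncated_covers_L1[OF Fb_Fe cover] C_lim by (rule grid_dev_tendsto_zero)
qed

lemma weighted_envelope_integrable:
  assumes "Fc \<noteq> {}" and env: "envelope Ycal Fc Fe" and W: "wsup_norm Ycal \<beta> Fe < \<infinity>"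
    and weight_int: "(\<integral>\<^sup>+\<omega>. ennreal \<bar>\<Sum>l<N (\<lambda>_. 0) \<omega>. (1 + (norm (Y (\<lambda>_. 0) l \<omega>))\<^sup>2) powr (- \<beta> / 2)\<bar> \<partial>M) < \<infinity>"
  obtains W where "W \<ge> 0" "wsup_norm Ycal \<beta> Fe = ereal W"
    "integrable M (diag_sum (\<lambda>y. (1 + (norm y)\<^sup>2) powr (- \<beta> / 2)) 0)"
    "(\<integral>\<^sup>+\<omega>. ennreal (\<Sum>l<N (\<lambda>_. 0) \<omega>. Fe (Y (\<lambda>_. 0) l \<omega>)) \<partial>M) < \<infinity>"
proof -
  define w :: "real^'l \<Rightarrow> real" where "w = (\<lambda>y. (1 + (norm y)\<^sup>2) powr (- \<beta> / 2))"
  obtain y0 where y0: "y0 \<in> Ycal"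
    using Y_in not_empty by blast
  have "ereal \<bar>Fe y0 * (1 + (norm y0)\<^sup>2) powr (\<beta> / 2)\<bar> \<le> wsup_norm Ycal \<beta> Fe"
    unfolding wsup_norm_def using y0 by (rule SUP_upper)
  then have "wsup_norm Ycal \<beta> Fe \<ge> 0"
    by (rule order_trans[rotated]) simp
  with W obtain W where W: "W \<ge> 0" "wsup_norm Ycal \<beta> Fe = ereal W"
    by (cases "wsup_norm Ycal \<beta> Fe") auto
  have [measurable]: "w \<in> borel_measurable borel"
    unfolding w_def by measurable
  have w_int: "integrable M (diag_sum w 0)"
  proof (rule integrableI_bounded)
    show "(\<integral>\<^sup>+\<omega>. ennreal (norm (diag_sum w 0 \<omega>)) \<partial>M) < \<infinity>"
      using weight_int by (simp add: diag_sum_eq diag_def w_def)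
  qed measurable
  have "(\<integral>\<^sup>+\<omega>. ennreal (\<Sum>l<N (\<lambda>_. 0) \<omega>. Fe (Y (\<lambda>_. 0) l \<omega>)) \<partial>M) \<le> (\<integral>\<^sup>+\<omega>. ennreal (W * diag_sum w 0 \<omega>) \<partial>M)"
  proof (intro nn_integral_mono ennreal_leI)
    fix \<omega> assume \<omega>: "\<omega> \<in> space M"
    have "Fe (Y (\<lambda>_. 0) l \<omega>) \<le> W * w (Y (\<lambda>_. 0) l \<omega>)" for l
      using abs_le_wsup_norm[OF Y_in[OF \<omega>] W(2)[THEN eq_refl], of "\<lambda>_. 0" l]
      unfolding w_def by linarith
    then show "(\<Sum>l<N (\<lambda>_. 0) \<omega>. Fe (Y (\<lambda>_. 0) l \<omega>)) \<le> W * diag_sum w 0 \<omega>"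
      by (simp add: diag_sum_eq diag_def sum_distrib_left sum_mono)
  qed
  also have "\<dots> < \<infinity>"
    using w_int W(1) diag_sum_nonneg[of _ w] 
    by (subst nn_integral_eq_integral) (auto simp: w_def intro!: AE_I2)
  finally show ?thesis
    using W w_int by (intro that) (simp_all add: w_def)
qed

lemma grid_dev_tendsto_zero_weighted:
  assumes C_lim: "filterlim (\<lambda>n. Min (range (C n))) at_top sequentially"
    and pm: "pointwise_measurable Ycal Fc" and "Fc \<noteq> {}" and env: "envelope Ycal Fc Fe"
    and W: "wsup_norm Ycal \<beta> Fe < \<infinity>"
    and weight_int: "(\<integral>\<^sup>+\<omega>. ennreal \<bar>\<Sum>l<N (\<lambda>_. 0) \<omega>. (1 + (norm (Y (\<lambda>_. 0) l \<omega>))\<^sup>2) powr (- \<beta> / 2)\<bar> \<partial>M) < \<infinity>"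
    and cover: "\<forall>\<eta>>0. covering_number (ereal \<eta> * wsup_norm Ycal \<beta> Fe) Fc
                  (\<lambda>f g. wsup_norm Ycal \<beta> (\<lambda>y. f y - g y)) < \<infinity>"
  shows "(\<lambda>n. grid_dev Fc (C n)) \<longlonglongrightarrow> 0"
proof -
  obtain W where W: "W \<ge> 0" "wsup_norm Ycal \<beta> Fe = ereal W"
    and w_int: "integrable M (diag_sum (\<lambda>y. (1 + (norm y)\<^sup>2) powr (- \<beta> / 2)) 0)"
    and Fe_int: "(\<integral>\<^sup>+\<omega>. ennreal (\<Sum>l<N (\<lambda>_. 0) \<omega>. Fe (Y (\<lambda>_. 0) l \<omega>)) \<partial>M) < \<infinity>"
    using \<open>Fc \<noteq> {}\<close> env W weight_int by (rule weighted_envelope_integrable)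
  show ?thesis
  proof (rule obtain_sep_exch_array_class[OF pm \<open>Fc \<noteq> {}\<close> env Fe_int])
    fix H Fb assume setup_H_Fb: "sep_exch_array_class M Ycal N Y Fc H Fb"
      and Fb_Fe: "\<And>y. y \<in> Ycal \<Longrightarrow> Fb y = Fe y"
    interpret sep_exch_array_class M Ycal N Y Fc H Fb
      by (fact setup_H_Fb)
    show ?thesis
      using has_truncated_covers_weighted[OF Fb_Fe W w_int cover] C_lim by (rule grid_dev_tendsto_zero)
  qed
qed

end

theorem lemma13:
  fixes M :: "'w measure"
    and Ycal :: "(real^'l) set"
    and N :: "('k::finite \<Rightarrow> nat) \<Rightarrow> 'w \<Rightarrow> nat"
    and Y :: "('k \<Rightarrow> nat) \<Rightarrow> nat \<Rightarrow> 'w \<Rightarrow> real^'l"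
    and Fc :: "(real^'l \<Rightarrow> real) set"
    and C :: "nat \<Rightarrow> 'k \<Rightarrow> nat"
  assumes M: "prob_space M"
    and N_meas: "\<And>j. N j \<in> M \<rightarrow>\<^sub>M count_space UNIV"
    and Y_meas: "\<And>j l. Y j l \<in> borel_measurable M"
    and Y_in: "\<And>j l \<omega>. \<omega> \<in> space M \<Longrightarrow> Y j l \<omega> \<in> Ycal"
    and exch: "\<And>\<pi> :: 'k \<Rightarrow> nat \<Rightarrow> nat. (\<forall>i. bij (\<pi> i)) \<Longrightarrow>
        distr M (arrayM UNIV) (\<lambda>\<omega>. (\<lambda>j. arr N Y \<omega> (\<lambda>i. \<pi> i (j i))))
          = distr M (arrayM UNIV) (arr N Y)"
    and indep: "\<And>c :: 'k \<Rightarrow> nat. (\<forall>i. c i \<ge> 1) \<Longrightarrow>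
        prob_space.indep_var M
          (arrayM {j. \<forall>i. j i < c i}) (\<lambda>\<omega>. restrict (arr N Y \<omega>) {j. \<forall>i. j i < c i})
          (arrayM {j. \<forall>i. j i \<ge> c i}) (\<lambda>\<omega>. restrict (arr N Y \<omega>) {j. \<forall>i. j i \<ge> c i})"
    and EN_pos: "(\<integral>\<^sup>+\<omega>. ennreal (real (N (\<lambda>_. 0) \<omega>)) \<partial>M) > 0"
    and C_lim: "filterlim (\<lambda>n. Min (range (C n))) at_top sequentially"
    and C_ratio: "\<exists>lam::'k \<Rightarrow> real. \<forall>i.
        (\<lambda>n. real (Min (range (C n))) / real (C n i)) \<longlonglongrightarrow> lam i"
    and pm: "pointwise_measurable Ycal Fc"
    and cond: "(\<exists>Fe. envelope Ycal Fc Fe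
                 \<and> (\<integral>\<^sup>+\<omega>. ennreal (\<Sum>l<N (\<lambda>_. 0) \<omega>. Fe (Y (\<lambda>_. 0) l \<omega>)) \<partial>M) < \<infinity>
                 \<and> (\<forall>\<eta>>0. \<exists>B::nat. \<forall>Q::(real^'l) pmf.
                        finite (set_pmf Q) \<and> set_pmf Q \<subseteq> Ycal \<longrightarrow>
                        covering_number (ereal (\<eta> * L1Q Q Fe)) Fc
                          (\<lambda>f g. ereal (L1Q Q (\<lambda>y. f y - g y))) \<le> enat B))
             \<or> (\<exists>Fe \<beta>. envelope Ycal Fc Fe
                 \<and> wsup_norm Ycal \<beta> Fe < \<infinity>
                 \<and> (\<integral>\<^sup>+\<omega>. ennreal \<bar>\<Sum>l<N (\<lambda>_. 0) \<omega>.
                        (1 + (norm (Y (\<lambda>_. 0) l \<omega>))\<^sup>2) powr (- \<beta> / 2)\<bar> \<partial>M) < \<infinity>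
                 \<and> (\<forall>\<eta>>0. covering_number (ereal \<eta> * wsup_norm Ycal \<beta> Fe) Fc
                          (\<lambda>f g. wsup_norm Ycal \<beta> (\<lambda>y. f y - g y)) < \<infinity>))"
  shows "(\<lambda>n. \<integral>\<^sup>+\<omega>. (SUP f\<in>Fc. ennreal \<bar>
            (\<Sum>j\<in>{j. \<forall>i. j i < C n i}. \<Sum>l<N j \<omega>. f (Y j l \<omega>)) / real (\<Prod>i\<in>UNIV. C n i)
            - prob_space.expectation M (\<lambda>\<omega>'. \<Sum>l<N (\<lambda>_. 0) \<omega>'. f (Y (\<lambda>_. 0) l \<omega>'))\<bar>) \<partial>M)
         \<longlonglongrightarrow> 0"
proof -
  interpret sep_exch_array M Ycal N Y
    using M N_meas Y_meas Y_in exch indep by (rule sep_exch_array.intro)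
  have "(\<lambda>n. grid_dev Fc (C n)) \<longlonglongrightarrow> 0"
  proof (cases "Fc = {}")
    case True
    then show ?thesis
      by (simp add: grid_dev_def bot_ennreal)
  next
    case False
    from cond show ?thesis
      using grid_dev_tendsto_zero_L1[OF C_lim pm False] grid_dev_tendsto_zero_weighted[OF C_lim pm False]
      by blast
  qed
  then show ?thesis
    by (simp add: grid_dev_def)
qed

end
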